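(* Let $n,m\ge1$. For each $i\in[n]$ let $d_i$ be a positive integer and $p_{i0}<\cdots<p_{id_i}$ reals, $\mathcal{X}=\prod_{i}\{p_{i0},\dots,p_{id_i}\}$, and $P=\{\boldsymbol{x}:A\boldsymbol{x}\ge\boldsymbol{h}\}$ a polytope. For $t\in[m]$, $i\in[n]$ let $f^t_i:\{p_{i0},\dots,p_{id_i}\}\to[L^t_i,U^t_i]$ and $\phi^t:\prod_i[L^t_i,U^t_i]\to\mathbb{R}$, let $\ell^t_i(\boldsymbol{z}_i)=f^t_i(p_{i0})+\sum_{j\in[d_i]}(f^t_i(p_{ij})-f^t_i(p_{i,j-1}))z_{ij}$, and $G=\{(\boldsymbol{z},\boldsymbol{\mu})\in\operatorname{vert}(\Delta)\times\mathbb{R}^m:\mu^t=\phi^t(\ell^t_1(\boldsymbol{z}_1),\dots,\ell^t_n(\boldsymbol{z}_n))\ \forall t\}$. For each $i\in[n]$ let $r_i$ be a positive integer and $Q_i\subseteq\mathbb{R}^{d_i}\times\mathbb{R}^{r_i}$ a polytope in variables $(\boldsymbol{z}_i,\boldsymbol{\delta}_i)$ such that the projection of $Q_i\cap(\mathbb{R}^{d_i}\times\{0,1\}^{r_i})$ onto $\boldsymbol{z}_i$ equals $\operatorname{vert}(\Delta^{d_i})$. Then $$E=\bigl\{(\boldsymbol{x},\boldsymbol{z},\boldsymbol{\mu},\boldsymbol{\delta}): (\boldsymbol{z},\boldsymbol{\mu})\in\operatorname{conv}(G),\ \boldsymbol{x}\in P,\ (x_i,\boldsymbol{z}_i)\in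 B_i,\ (\boldsymbol{z}_i,\boldsymbol{\delta}_i)\in Q_i,\ \boldsymbol{\delta}_i\in\{0,1\}^{r_i}\ \forall i\in[n]\bigr\}$$ is an MIP formulation of $\{(\boldsymbol{x},\boldsymbol{\mu}):\boldsymbol{x}\in P\cap\mathcal{X},\ \mu^t=\phi^t(f^t_1(x_1),\dots,f^t_n(x_n))\ \forall t\}$. Moreover, if each $Q_i\cap(\mathbb{R}^{d_i}\times\{0,1\}^{r_i})$ is ideal (every vertex of $Q_i$ has binary $\boldsymbol{\delta}_i$) and the polyhedral constraint is absent ($P$ replaced by $\mathbb{R}^n$), then $E$ is ideal (every vertex of the relaxation obtained by dropping $\boldsymbol{\delta}_i\in\{0,1\}^{r_i}$ has binary $\boldsymbol{\delta}$).
   Context: $[n]=\{1,\dots,n\}$. $\Delta^d=\{\boldsymbol{z}\in\mathbb{R}^d:1\ge z_1\ge\cdots\ge z_d\ge0\}$, $\Delta=\Delta^{d_1}\times\cdots\times\Delta^{d_n}$, $\operatorname{vert}(\Delta)=\Delta\cap\{0,1\}^{\sum_i d_i}$. $B_i=\{(x_i,\boldsymbol{z}_i):x_i=p_{i0}+\sum_{j\in[d_i]}(p_{ij}-p_{i,j-1})z_{ij},\ \boldsymbol{z}_i\in\Delta^{d_i}\}$. An MIP formulation of a set $S$ is a polyhedron with binary restrictions on some variables whose projection onto the original variables equals $S$. *)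

theory Defs
  imports "HOL-Analysis.Analysis"
begin

text \<open>Vectors are functions from a (finite) coordinate index set into the reals,
  extended by 0 outside the index set.\<close>

definition supp_in :: "'a set \<Rightarrow> ('a \<Rightarrow> real) \<Rightarrow> bool" where
  "supp_in I v \<longleftrightarrow> (\<forall>c. c \<notin> I \<longrightarrow> v c = 0)"

definition restr :: "'a set \<Rightarrow> ('a \<Rightarrow> real) \<Rightarrow> ('a \<Rightarrow> real)" where
  "restr C v = (\<lambda>c. if c \<in> C then v c else 0)"

definition polyhedron_in :: "'a set \<Rightarrow> ('a \<Rightarrow> real) set \<Rightarrow> bool" where
  "polyhedron_in I S \<longleftrightarrow> finite I \<and>
     (\<exists>(K::nat) (a::nat \<Rightarrow> 'a \<Rightarrow> real) (b::nat \<Rightarrow> real).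
        S = {v. supp_in I v \<and> (\<forall>k<K. (\<Sum>c\<in>I. a k c * v c) \<ge> b k)})"

definition polytope_in :: "'a set \<Rightarrow> ('a \<Rightarrow> real) set \<Rightarrow> bool" where
  "polytope_in I S \<longleftrightarrow> polyhedron_in I S \<and> (\<exists>B. \<forall>v\<in>S. \<forall>c. \<bar>v c\<bar> \<le> B)"

definition conv_hull :: "('a \<Rightarrow> real) set \<Rightarrow> ('a \<Rightarrow> real) set" where
  "conv_hull S = {v. \<exists>(k::nat) (u::nat \<Rightarrow> real) (w::nat \<Rightarrow> 'a \<Rightarrow> real).
      (\<forall>l<k. u l \<ge> 0 \<and> w l \<in> S) \<and> (\<Sum>l<k. u l) = 1 \<and> v = (\<lambda>c. \<Sum>l<k. u l * w l c)}"

definition is_vertex :: "('a \<Rightarrow> real) \<Rightarrow> ('a \<Rightarrow> real) set \<Rightarrow> bool" where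
  "is_vertex v S \<longleftrightarrow> v \<in> S \<and>
     \<not> (\<exists>a\<in>S. \<exists>b\<in>S. a \<noteq> b \<and> (\<exists>\<theta>::real. 0 < \<theta> \<and> \<theta> < 1 \<and> v = (\<lambda>c. (1 - \<theta>) * a c + \<theta> * b c)))"

definition Delta_simplex :: "nat \<Rightarrow> (nat \<Rightarrow> real) set" where
  "Delta_simplex d = {z. supp_in {1..d} z \<and> (d \<ge> 1 \<longrightarrow> z 1 \<le> 1 \<and> z d \<ge> 0) \<and>
                  (\<forall>j. 1 \<le> j \<and> j < d \<longrightarrow> z j \<ge> z (j + 1))}"

definition vert_simplex :: "nat \<Rightarrow> (nat \<Rightarrow> real) set" where
  "vert_simplex d = Delta_simplex d \<inter> {z. \<forall>j\<in>{1..d}. z j \<in> {0, 1}}"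

definition mip_formulation ::
    "'a set \<Rightarrow> 'a set \<Rightarrow> 'a set \<Rightarrow> ('a \<Rightarrow> real) set \<Rightarrow> ('a \<Rightarrow> real) set \<Rightarrow> bool" where
  "mip_formulation I J Orig E S \<longleftrightarrow> J \<subseteq> I \<and> Orig \<subseteq> I \<and>
     (\<exists>R. polyhedron_in I R \<and> E = R \<inter> {v. \<forall>c\<in>J. v c \<in> {0, 1}}) \<and>
     restr Orig ` E = S"

text \<open>Coordinates of the extended space (x, z, mu, delta).\<close>
datatype coord = X nat | Z nat nat | Mu nat | Dl nat nat

definition IX :: "nat \<Rightarrow> coord set" where "IX n = X ` {1..n}"
definition IZ :: "nat \<Rightarrow> (nat \<Rightarrow> nat) \<Rightarrow> coord set" where
  "IZ n d = {Z i j | i j. i \<in> {1..n} \<and> j \<in> {1..d i}}"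
definition IM :: "nat \<Rightarrow> coord set" where "IM m = Mu ` {1..m}"
definition ID :: "nat \<Rightarrow> (nat \<Rightarrow> nat) \<Rightarrow> coord set" where
  "ID n r = {Dl i k | i k. i \<in> {1..n} \<and> k \<in> {1..r i}}"

definition zvec :: "(coord \<Rightarrow> real) \<Rightarrow> nat \<Rightarrow> nat \<Rightarrow> real" where
  "zvec v i = (\<lambda>j. v (Z i j))"

text \<open>(z_i, delta_i) as a vector in R^{d_i} x R^{r_i}, coordinates Inl j / Inr k.\<close>
definition zdvec :: "(coord \<Rightarrow> real) \<Rightarrow> nat \<Rightarrow> nat + nat \<Rightarrow> real" where
  "zdvec v i = (\<lambda>q. case q of Inl j \<Rightarrow> v (Z i j) | Inr k \<Rightarrow> v (Dl i k))"

definition Bset :: "(nat \<Rightarrow> nat) \<Rightarrow> (nat \<Rightarrow> nat \<Rightarrow> real) \<Rightarrow> nat \<Rightarrow> (real \<times> (nat \<Rightarrow> real)) set" where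
  "Bset d p i = {(xi, z). xi = p i 0 + (\<Sum>j\<in>{1..d i}. (p i j - p i (j - 1)) * z j) \<and> z \<in> Delta_simplex (d i)}"

definition ell :: "(nat \<Rightarrow> nat) \<Rightarrow> (nat \<Rightarrow> nat \<Rightarrow> real) \<Rightarrow> (nat \<Rightarrow> nat \<Rightarrow> real \<Rightarrow> real)
                   \<Rightarrow> nat \<Rightarrow> nat \<Rightarrow> (nat \<Rightarrow> real) \<Rightarrow> real" where
  "ell d p f t i z = f t i (p i 0) + (\<Sum>j\<in>{1..d i}. (f t i (p i j) - f t i (p i (j - 1))) * z j)"

definition Gset :: "nat \<Rightarrow> nat \<Rightarrow> (nat \<Rightarrow> nat) \<Rightarrow> (nat \<Rightarrow> nat \<Rightarrow> real)
      \<Rightarrow> (nat \<Rightarrow> nat \<Rightarrow> real \<Rightarrow> real) \<Rightarrow> (nat \<Rightarrow> (nat \<Rightarrow> real) \<Rightarrow> real) \<Rightarrow> (coord \<Rightarrow> real) set" where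
  "Gset n m d p f \<phi> = {v. supp_in (IZ n d \<union> IM m) v \<and>
       (\<forall>i\<in>{1..n}. zvec v i \<in> vert_simplex (d i)) \<and>
       (\<forall>t\<in>{1..m}. v (Mu t) = \<phi> t (\<lambda>i. if i \<in> {1..n} then ell d p f t i (zvec v i) else 0))}"

definition Erel :: "nat \<Rightarrow> nat \<Rightarrow> (nat \<Rightarrow> nat) \<Rightarrow> (nat \<Rightarrow> nat \<Rightarrow> real) \<Rightarrow> (nat \<Rightarrow> nat)
      \<Rightarrow> (nat \<Rightarrow> nat \<Rightarrow> real \<Rightarrow> real) \<Rightarrow> (nat \<Rightarrow> (nat \<Rightarrow> real) \<Rightarrow> real)
      \<Rightarrow> (nat \<Rightarrow> real) set \<Rightarrow> (nat \<Rightarrow> (nat + nat \<Rightarrow> real) set) \<Rightarrow> (coord \<Rightarrow> real) set" where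
  "Erel n m d p r f \<phi> P Q = {v. supp_in (IX n \<union> IZ n d \<union> IM m \<union> ID n r) v \<and>
       restr (IZ n d \<union> IM m) v \<in> conv_hull (Gset n m d p f \<phi>) \<and>
       (\<lambda>i. v (X i)) \<in> P \<and>
       (\<forall>i\<in>{1..n}. (v (X i), zvec v i) \<in> Bset d p i \<and> zdvec v i \<in> Q i)}"

definition Eset :: "nat \<Rightarrow> nat \<Rightarrow> (nat \<Rightarrow> nat) \<Rightarrow> (nat \<Rightarrow> nat \<Rightarrow> real) \<Rightarrow> (nat \<Rightarrow> nat)
      \<Rightarrow> (nat \<Rightarrow> nat \<Rightarrow> real \<Rightarrow> real) \<Rightarrow> (nat \<Rightarrow> (nat \<Rightarrow> real) \<Rightarrow> real)
      \<Rightarrow> (nat \<Rightarrow> real) set \<Rightarrow> (nat \<Rightarrow> (nat + nat \<Rightarrow> real) set) \<Rightarrow> (coord \<Rightarrow> real) set" where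
  "Eset n m d p r f \<phi> P Q = Erel n m d p r f \<phi> P Q \<inter> {v. \<forall>c\<in>ID n r. v c \<in> {0, 1}}"

definition Target :: "nat \<Rightarrow> nat \<Rightarrow> (nat \<Rightarrow> nat) \<Rightarrow> (nat \<Rightarrow> nat \<Rightarrow> real)
      \<Rightarrow> (nat \<Rightarrow> nat \<Rightarrow> real \<Rightarrow> real) \<Rightarrow> (nat \<Rightarrow> (nat \<Rightarrow> real) \<Rightarrow> real)
      \<Rightarrow> (nat \<Rightarrow> real) set \<Rightarrow> (coord \<Rightarrow> real) set" where
  "Target n m d p f \<phi> P = {v. supp_in (IX n \<union> IM m) v \<and>
       (\<lambda>i. v (X i)) \<in> P \<and> (\<forall>i\<in>{1..n}. v (X i) \<in> p i ` {0..d i}) \<and>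
       (\<forall>t\<in>{1..m}. v (Mu t) = \<phi> t (\<lambda>i. if i \<in> {1..n} then f t i (v (X i)) else 0))}"

end

theory Submission
  imports Defs
begin

(* MIP formulation: a point of E is determined by its binary part. If two points of E have the
   same delta_i, the midpoint of their (z_i, delta_i)-parts lies in Q_i and has binary delta_i, so
   its z_i-part is a vertex of Delta^{d_i}; being the midpoint of two vertices, this forces equal
   z_i-parts. Then z fixes x through B_i and, as a binary point of conv(G), the point of G and mu.
   A finite set of points determined by binary coordinates is cut out of the binary points of a
   polyhedron by big-M constraints. The projection is read off the staircase vertices of Delta^d.
   Ideality: let v be a vertex of the relaxation without P. Write its (z, mu)-part as a convex
   combination of points of G and, as Q_i is an ideal polytope, each (z_i, delta_i) as a convex
   combination of binary points of Q_i. Grouping the latter by their z_i-part and taking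
   conditional averages writes v as a convex combination of points of the relaxation whose
   (z, mu)-part lies in G, so z is binary at the vertex v. Then replacing delta_i by the binary
   points of its decomposition shows that delta_i is binary as well. A polytope is the convex hull
   of its vertices: from a non-vertex, move along a line in both directions until a further
   constraint gets tight. *)

section \<open>Convex combinations\<close>

definition is_convex :: "('a \<Rightarrow> real) set \<Rightarrow> bool" where
  "is_convex S \<longleftrightarrow>
     (\<forall>a\<in>S. \<forall>b\<in>S. \<forall>\<theta>::real. 0 \<le> \<theta> \<and> \<theta> \<le> 1 \<longrightarrow> (\<lambda>c. (1 - \<theta>) * a c + \<theta> * b c) \<in> S)"

lemma is_convexD:
  "is_convex S \<Longrightarrow> a \<in> S \<Longrightarrow> b \<in> S \<Longrightarrow> 0 \<le> \<theta> \<Longrightarrow> \<theta> \<le> 1 \<Longrightarrow>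
     (\<lambda>c. (1 - \<theta>) * a c + \<theta> * b c) \<in> S"
  unfolding is_convex_def by blast

lemma conv_hullI:
  assumes "\<forall>l<(k::nat). 0 \<le> u l \<and> w l \<in> S" "(\<Sum>l<k. u l) = 1" "v = (\<lambda>c. \<Sum>l<k. u l * w l c)"
  shows "v \<in> conv_hull S"
  using assms unfolding conv_hull_def by blast

lemma conv_hullE:
  assumes "v \<in> conv_hull S"
  obtains k u w where "\<forall>l<(k::nat). 0 \<le> u l \<and> w l \<in> S" "(\<Sum>l<k. u l) = 1"
    "v = (\<lambda>c. \<Sum>l<k. u l * w l c)"
  using assms unfolding conv_hull_def by blast

lemma conv_hull_inc: "x \<in> S \<Longrightarrow> x \<in> conv_hull S"
  by (rule conv_hullI[of 1 "\<lambda>_. 1" "\<lambda>_. x"]) auto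

lemma conv_hull_mono: "S \<subseteq> T \<Longrightarrow> conv_hull S \<subseteq> conv_hull T"
  unfolding conv_hull_def by blast

lemma sum_lessThan_add: "(\<Sum>l<a + b. f l) = (\<Sum>l<a. f l) + (\<Sum>l<b. f (a + l))"
  for f :: "nat \<Rightarrow> 'b::comm_monoid_add"
  by (induction b) (simp_all add: add.assoc)

lemma is_convex_conv_hull: "is_convex (conv_hull T)"
  unfolding is_convex_def
proof (intro ballI allI impI)
  fix a b and \<theta> :: real
  assume "a \<in> conv_hull T" "b \<in> conv_hull T" and \<theta>: "0 \<le> \<theta> \<and> \<theta> \<le> 1"
  obtain k1 u1 w1 where
    a: "\<forall>l<(k1::nat). 0 \<le> u1 l \<and> w1 l \<in> T" "(\<Sum>l<k1. u1 l) = 1" "a = (\<lambda>c. \<Sum>l<k1. u1 l * w1 l c)"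
    using \<open>a \<in> conv_hull T\<close> by (rule conv_hullE)
  obtain k2 u2 w2 where
    b: "\<forall>l<(k2::nat). 0 \<le> u2 l \<and> w2 l \<in> T" "(\<Sum>l<k2. u2 l) = 1" "b = (\<lambda>c. \<Sum>l<k2. u2 l * w2 l c)"
    using \<open>b \<in> conv_hull T\<close> by (rule conv_hullE)
  define u where "u l = (if l < k1 then (1 - \<theta>) * u1 l else \<theta> * u2 (l - k1))" for l
  define w where "w l = (if l < k1 then w1 l else w2 (l - k1))" for l
  show "(\<lambda>c. (1 - \<theta>) * a c + \<theta> * b c) \<in> conv_hull T"
  proof (rule conv_hullI[of "k1 + k2" u w])
    show "\<forall>l<k1 + k2. 0 \<le> u l \<and> w l \<in> T"
      using a(1) b(1) \<theta> by (auto simp: u_def w_def)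
    show "(\<Sum>l<k1 + k2. u l) = 1"
      using a(2) b(2) by (simp add: sum_lessThan_add u_def flip: sum_distrib_left)
    show "(\<lambda>c. (1 - \<theta>) * a c + \<theta> * b c) = (\<lambda>c. \<Sum>l<k1 + k2. u l * w l c)"
      unfolding a(3) b(3) by (simp add: sum_lessThan_add u_def w_def sum_distrib_left mult.assoc)
  qed
qed

lemma convex_sum_mem:
  assumes S: "is_convex S" and F: "finite F"
    and u: "\<forall>s\<in>F. 0 \<le> u s" "sum u F = 1" and w: "\<forall>s\<in>F. 0 < u s \<longrightarrow> w s \<in> S"
  shows "(\<lambda>c. \<Sum>s\<in>F. u s * w s c) \<in> S"
  using F u w
proof (induction F arbitrary: u rule: finite_induct)
  case empty
  then show ?case by simp
next
  case (insert x F)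
  have ux: "0 \<le> u x" "u x \<le> 1"
    using insert.prems insert.hyps sum_nonneg[of F u] by auto
  show ?case
  proof (cases "u x = 1")
    case True
    then have "sum u F = 0" using insert by simp
    then have "\<forall>s\<in>F. u s = 0" using insert by (simp add: sum_nonneg_eq_0_iff)
    then show ?thesis using True insert by simp
  next
    case False
    define u' where "u' s = u s / (1 - u x)" for s
    have "sum u' F = 1"
      using insert False by (simp add: u'_def flip: sum_divide_distrib)
    moreover have "0 < 1 - u x" using False ux by simp
    ultimately have IH: "(\<lambda>c. \<Sum>s\<in>F. u' s * w s c) \<in> S"
      using insert by (intro insert.IH) (auto simp: u'_def zero_less_divide_iff)
    have comb: "(\<lambda>c. \<Sum>s\<in>insert x F. u s * w s c)
        = (\<lambda>c. (1 - u x) * (\<Sum>s\<in>F. u' s * w s c) + u x * w x c)"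
      using insert False by (simp add: u'_def sum_distrib_left add.commute)
    show ?thesis
    proof (cases "u x = 0")
      case True
      then show ?thesis using comb IH by simp
    next
      case False
      then show ?thesis
        unfolding comb using ux insert by (intro is_convexD[OF S IH]) auto
    qed
  qed
qed

lemma convex_conditional_average:
  assumes S: "is_convex S" and F: "finite F" and \<alpha>: "\<forall>s\<in>F. 0 \<le> \<alpha> s" "0 < sum \<alpha> F"
    and w: "\<forall>s\<in>F. w s \<in> S"
  shows "(\<lambda>c. (\<Sum>s\<in>F. \<alpha> s * w s c) / sum \<alpha> F) \<in> S"
proof -
  have "(\<lambda>c. \<Sum>s\<in>F. \<alpha> s / sum \<alpha> F * w s c) \<in> S"
    using \<alpha> w by (intro convex_sum_mem[OF S F]) (auto simp flip: sum_divide_distrib)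
  then show ?thesis by (simp add: sum_divide_distrib)
qed

lemma vertex_convex_sum:
  assumes v: "is_vertex v S" and S: "is_convex S" and F: "finite F"
    and u: "\<forall>s\<in>F. 0 \<le> u s" "sum u F = 1" and w: "\<forall>s\<in>F. 0 < u s \<longrightarrow> w s \<in> S"
    and vsum: "v = (\<lambda>c. \<Sum>s\<in>F. u s * w s c)"
  shows "\<exists>s\<in>F. 0 < u s \<and> v = w s"
proof -
  obtain s0 where s0: "s0 \<in> F" "0 < u s0"
    using u by (metis less_eq_real_def sum_nonneg_eq_0_iff F zero_neq_one)
  show ?thesis
  proof (cases "u s0 = 1")
    case True
    then have "sum u (F - {s0}) = 0" using u s0 F by (simp add: sum_diff1)
    then have "\<forall>s\<in>F - {s0}. u s = 0" using u F by (subst (asm) sum_nonneg_eq_0_iff) auto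
    then have "v = w s0"
      unfolding vsum using s0 F True by (simp add: sum.remove)
    then show ?thesis using s0 by blast
  next
    case False
    have us0: "u s0 < 1"
      using u s0 F False member_le_sum[of s0 F u] by fastforce
    define u' where "u' s = u s / (1 - u s0)" for s
    define v' where "v' = (\<lambda>c. \<Sum>s\<in>F - {s0}. u' s * w s c)"
    have "sum u' (F - {s0}) = 1"
      using u s0 F us0 by (simp add: u'_def sum_diff1 flip: sum_divide_distrib)
    then have v'S: "v' \<in> S"
      unfolding v'_def using u w us0 F
      by (intro convex_sum_mem[OF S]) (auto simp: u'_def zero_less_divide_iff)
    have comb: "v = (\<lambda>c. (1 - u s0) * v' c + u s0 * w s0 c)"
      unfolding vsum v'_def using s0 F us0 by (simp add: sum.remove u'_def sum_distrib_left add.commute)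
    have "v' = w s0"
      using v v'S w s0 us0 comb unfolding is_vertex_def by blast
    then have "v = w s0" using comb by (simp add: algebra_simps)
    then show ?thesis using s0 by blast
  qed
qed

lemma convex_sum_binary_forces:
  fixes u x :: "'s \<Rightarrow> real"
  assumes F: "finite F" and u: "\<forall>s\<in>F. 0 \<le> u s" "sum u F = 1"
    and x: "\<forall>s\<in>F. 0 \<le> x s \<and> x s \<le> 1" and bin: "(\<Sum>s\<in>F. u s * x s) \<in> {0, 1}"
    and s: "s \<in> F" "0 < u s"
  shows "x s = (\<Sum>s\<in>F. u s * x s)"
proof (cases "(\<Sum>s\<in>F. u s * x s) = 0")
  case True
  then have "u s * x s = 0"
    using F u x s by (subst (asm) sum_nonneg_eq_0_iff) auto
  then show ?thesis using s True by simp
next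
  case False
  then have one: "(\<Sum>s\<in>F. u s * x s) = 1" using bin by simp
  have "(\<Sum>s\<in>F. u s * (1 - x s)) = 0"
    using one u by (simp add: algebra_simps sum_subtractf)
  then have "u s * (1 - x s) = 0"
    using F u x s by (subst (asm) sum_nonneg_eq_0_iff) auto
  then show ?thesis using s one by simp
qed

lemma conv_hull_convex_sum:
  assumes F: "finite F" and u: "\<forall>s\<in>F. 0 \<le> u s" "sum u F = 1" and w: "\<forall>s\<in>F. 0 < u s \<longrightarrow> w s \<in> T"
  shows "(\<lambda>c. \<Sum>s\<in>F. u s * w s c) \<in> conv_hull T"
proof -
  obtain s0 where s0: "s0 \<in> F" "0 < u s0"
    using u by (metis less_eq_real_def sum_nonneg_eq_0_iff F zero_neq_one)
  define w' where "w' s = (if 0 < u s then w s else w s0)" for s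
  obtain e where e: "bij_betw e {..<card F} F"
    using ex_bij_betw_nat_finite[OF F] atLeast0LessThan by auto
  have "u s * w s c = u s * w' s c" if "s \<in> F" for s c
    using u that by (cases "0 < u s") (auto simp: w'_def)
  then have "(\<lambda>c. \<Sum>s\<in>F. u s * w s c) = (\<lambda>c. \<Sum>s\<in>F. u s * w' s c)"
    by (intro ext sum.cong) auto
  also have "\<dots> = (\<lambda>c. \<Sum>l<card F. u (e l) * w' (e l) c)"
    by (intro ext) (rule sum.reindex_bij_betw[OF e, symmetric])
  also have "\<dots> \<in> conv_hull T"
  proof (rule conv_hullI[OF _ _ refl])
    show "\<forall>l<card F. 0 \<le> u (e l) \<and> w' (e l) \<in> T"
      using u w s0 bij_betw_apply[OF e] by (auto simp: w'_def)
    show "(\<Sum>l<card F. u (e l)) = 1"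
      using u(2) sum.reindex_bij_betw[OF e, of u] by simp
  qed
  finally show ?thesis .
qed

lemma vertex_mem_conv_hull:
  assumes "is_vertex v S" "is_convex S" "T \<subseteq> S" "v \<in> conv_hull T"
  shows "v \<in> T"
proof -
  obtain k u w where "\<forall>l<(k::nat). 0 \<le> u l \<and> w l \<in> T" "(\<Sum>l<k. u l) = 1"
    "v = (\<lambda>c. \<Sum>l<k. u l * w l c)"
    using assms(4) by (rule conv_hullE)
  then obtain l where "l < k" "v = w l"
    using vertex_convex_sum[OF assms(1,2), of "{..<k}" u w] assms(3) by auto
  then show ?thesis using \<open>\<forall>l<k. 0 \<le> u l \<and> w l \<in> T\<close> by simp
qed

lemma sum_conditional_average:
  fixes \<beta> :: "'l \<Rightarrow> real" and \<alpha> x :: "'s \<Rightarrow> real" and k :: "'l \<Rightarrow> 'k" and \<kappa> :: "'s \<Rightarrow> 'k"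
  assumes L: "finite L" and S: "finite S" and \<alpha>: "\<forall>s\<in>S. 0 \<le> \<alpha> s"
    and marginal: "\<forall>j. (\<Sum>l\<in>{l\<in>L. k l = j}. \<beta> l) = (\<Sum>s\<in>{s\<in>S. \<kappa> s = j}. \<alpha> s)"
  shows "(\<Sum>l\<in>L. \<beta> l * ((\<Sum>s\<in>{s\<in>S. \<kappa> s = k l}. \<alpha> s * x s) / (\<Sum>s\<in>{s\<in>S. \<kappa> s = k l}. \<alpha> s)))
       = (\<Sum>s\<in>S. \<alpha> s * x s)"
proof -
  define B where "B j = (\<Sum>s\<in>{s\<in>S. \<kappa> s = j}. \<alpha> s)" for j
  define X where "X j = (\<Sum>s\<in>{s\<in>S. \<kappa> s = j}. \<alpha> s * x s)" for j
  have X0: "X j = 0" if "B j = 0" for j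
  proof -
    have "\<forall>s\<in>{s\<in>S. \<kappa> s = j}. \<alpha> s = 0"
      using that S \<alpha> unfolding B_def by (subst (asm) sum_nonneg_eq_0_iff) auto
    then show ?thesis unfolding X_def by simp
  qed
  have "(\<Sum>l\<in>L. \<beta> l * (X (k l) / B (k l))) = (\<Sum>j\<in>k ` L. \<Sum>l\<in>{l\<in>L. k l = j}. \<beta> l * (X j / B j))"
    using L by (subst sum.image_gen[of L _ k]) auto
  also have "\<dots> = (\<Sum>j\<in>k ` L. (\<Sum>l\<in>{l\<in>L. k l = j}. \<beta> l) * (X j / B j))"
    by (simp only: sum_distrib_right)
  also have "\<dots> = (\<Sum>j\<in>k ` L. B j * (X j / B j))"
    using marginal unfolding B_def by simp
  also have "\<dots> = (\<Sum>j\<in>k ` L \<union> \<kappa> ` S. X j)"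
  proof (rule sum.mono_neutral_cong_left)
    show "\<forall>j\<in>k ` L \<union> \<kappa> ` S - k ` L. X j = 0"
    proof
      fix j assume "j \<in> k ` L \<union> \<kappa> ` S - k ` L"
      then have "{l\<in>L. k l = j} = {}" by auto
      then have "B j = 0" using marginal unfolding B_def by (metis sum.empty)
      then show "X j = 0" by (rule X0)
    qed
    show "B j * (X j / B j) = X j" if "j \<in> k ` L" for j
      using X0 by (cases "B j = 0") simp_all
  qed (use L S in auto)
  also have "\<dots> = (\<Sum>j\<in>\<kappa> ` S. X j)"
    by (rule sum.mono_neutral_right) (use L S in \<open>auto simp: X_def intro!: sum.neutral\<close>)
  also have "\<dots> = (\<Sum>s\<in>S. \<alpha> s * x s)"
    unfolding X_def using S by (subst sum.image_gen[of S _ \<kappa>]) auto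
  finally show ?thesis unfolding B_def X_def .
qed

section \<open>Polytopes\<close>

lemma sum_mult_lin_comb:
  "(\<Sum>c\<in>I. a c * (\<alpha> * x c + \<beta> * y c)) = \<alpha> * (\<Sum>c\<in>I. a c * x c) + \<beta> * (\<Sum>c\<in>I. a c * y c)"
  for a x y :: "'a \<Rightarrow> real"
  by (simp add: sum.distrib sum_distrib_left algebra_simps)

lemma polyhedron_in_supp: "polyhedron_in I S \<Longrightarrow> v \<in> S \<Longrightarrow> supp_in I v"
  unfolding polyhedron_in_def by auto

lemma polyhedron_in_is_convex:
  assumes "polyhedron_in I S"
  shows "is_convex S"
proof -
  obtain K a b where S: "S = {v. supp_in I v \<and> (\<forall>k<(K::nat). b k \<le> (\<Sum>c\<in>I. a k c * v c))}"
    using assms unfolding polyhedron_in_def by blast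
  have "b k \<le> (1 - \<theta>) * (\<Sum>c\<in>I. a k c * x c) + \<theta> * (\<Sum>c\<in>I. a k c * y c)"
    if "b k \<le> (\<Sum>c\<in>I. a k c * x c)" "b k \<le> (\<Sum>c\<in>I. a k c * y c)" "0 \<le> \<theta>" "\<theta> \<le> 1"
    for k x y and \<theta> :: real
  proof -
    have "(1 - \<theta>) * b k + \<theta> * b k \<le> (1 - \<theta>) * (\<Sum>c\<in>I. a k c * x c) + \<theta> * (\<Sum>c\<in>I. a k c * y c)"
      using that by (intro add_mono mult_left_mono) auto
    then show ?thesis by (simp add: algebra_simps)
  qed
  then show ?thesis
    unfolding is_convex_def S supp_in_def by (auto simp: sum_mult_lin_comb)
qed

lemma convex_comb_eq_lower_bound:
  fixes x y b \<theta> :: real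
  assumes "b \<le> x" "b \<le> y" "0 < \<theta>" "\<theta> < 1" "(1 - \<theta>) * x + \<theta> * y = b"
  shows "x = b" "y = b"
proof -
  have "0 \<le> (1 - \<theta>) * (x - b)" "0 \<le> \<theta> * (y - b)" using assms by simp_all
  moreover have "(1 - \<theta>) * (x - b) + \<theta> * (y - b) = 0" using assms(5) by (simp add: algebra_simps)
  ultimately have "(1 - \<theta>) * (x - b) = 0" "\<theta> * (y - b) = 0" by linarith+
  then show "x = b" "y = b" using assms(3,4) by simp_all
qed

lemma ray_exit_step:
  fixes A W b :: "'k \<Rightarrow> real"
  assumes K: "finite K" and feas: "\<forall>k\<in>K. b k \<le> A k"
    and tight: "\<forall>k\<in>K. A k = b k \<longrightarrow> W k = 0" and dec: "\<exists>k\<in>K. W k < 0"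
  shows "\<exists>t>0. (\<forall>k\<in>K. b k \<le> A k + t * W k) \<and>
           {k\<in>K. b k < A k + t * W k} \<subset> {k\<in>K. b k < A k}"
proof -
  define N where "N = {k\<in>K. W k < 0}"
  define ratio where "ratio k = (A k - b k) / (- W k)" for k
  define t where "t = Min (ratio ` N)" \<comment> \<open>the ratio test\<close>
  have N: "finite N" "N \<noteq> {}" using K dec unfolding N_def by auto
  have slack: "b k < A k" if "k \<in> N" for k
    using that feas tight unfolding N_def by force
  have "t \<in> ratio ` N" unfolding t_def using N by (intro Min_in) auto
  then obtain ks where ks: "ks \<in> N" "t = ratio ks" by blast
  have t_le: "t \<le> ratio k" if "k \<in> N" for k
    unfolding t_def using N that by simp
  have "t > 0"
    using ks slack[OF ks(1)] unfolding ratio_def N_def by (simp add: divide_pos_neg)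
  moreover have "b k \<le> A k + t * W k" if "k \<in> K" for k
  proof (cases "W k < 0")
    case True
    have "t \<le> (A k - b k) / (- W k)"
      using t_le[of k] that True unfolding N_def ratio_def by simp
    then have "t * (- W k) \<le> A k - b k"
      using True by (metis neg_0_less_iff_less pos_le_divide_eq)
    then show ?thesis by simp
  next
    case False
    then show ?thesis using \<open>t > 0\<close> feas that by (simp add: add_increasing2)
  qed
  moreover have "{k\<in>K. b k < A k + t * W k} \<subset> {k\<in>K. b k < A k}"
  proof
    show "{k\<in>K. b k < A k + t * W k} \<subseteq> {k\<in>K. b k < A k}"
      using feas tight by fastforce
    have "A ks + t * W ks = b ks"
      using ks unfolding N_def ratio_def by (simp add: field_simps)
    then show "{k\<in>K. b k < A k + t * W k} \<noteq> {k\<in>K. b k < A k}"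
      using ks(1) slack[OF ks(1)] unfolding N_def by force
  qed
  ultimately show ?thesis by blast
qed

lemma polytope_in_no_ray:
  assumes "polytope_in I S" and "p \<in> S" and "w c0 \<noteq> 0"
  shows "\<exists>t\<ge>0. (\<lambda>c. p c + t * w c) \<notin> S"
proof -
  obtain B where B: "\<forall>v\<in>S. \<forall>c. \<bar>v c\<bar> \<le> B" using assms(1) unfolding polytope_in_def by blast
  define t where "t = (\<bar>B\<bar> + \<bar>p c0\<bar> + 1) / \<bar>w c0\<bar>"
  have "t \<ge> 0" unfolding t_def by simp
  moreover have "t * \<bar>w c0\<bar> = \<bar>B\<bar> + \<bar>p c0\<bar> + 1" unfolding t_def using assms(3) by simp
  ultimately have "\<bar>t * w c0\<bar> = \<bar>B\<bar> + \<bar>p c0\<bar> + 1" by (simp add: abs_mult)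
  then have "B < \<bar>p c0 + t * w c0\<bar>" by linarith
  moreover have "\<bar>p c0 + t * w c0\<bar> \<le> B" if "(\<lambda>c. p c + t * w c) \<in> S"
    using B that by (metis (no_types, lifting))
  ultimately show ?thesis using \<open>t \<ge> 0\<close> by (meson not_le)
qed

lemma polytope_ray_step:
  fixes a :: "nat \<Rightarrow> 'a \<Rightarrow> real"
  assumes S: "S = {v. supp_in I v \<and> (\<forall>k<K. b k \<le> (\<Sum>c\<in>I. a k c * v c))}" and P: "polytope_in I S"
    and p: "p \<in> S" and w: "supp_in I w" "w c0 \<noteq> 0"
    and tight: "\<forall>k<K. (\<Sum>c\<in>I. a k c * p c) = b k \<longrightarrow> (\<Sum>c\<in>I. a k c * w c) = 0"
  obtains t where "0 < t" "(\<lambda>c. p c + t * w c) \<in> S"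
    "card {k\<in>{..<K}. b k < (\<Sum>c\<in>I. a k c * (p c + t * w c))}
       < card {k\<in>{..<K}. b k < (\<Sum>c\<in>I. a k c * p c)}"
proof -
  define lhs where "lhs k v = (\<Sum>c\<in>I. a k c * v c)" for k v
  have lhs_ray: "(\<Sum>c\<in>I. a k c * (p c + t * w c)) = lhs k p + t * lhs k w" for k t
    unfolding lhs_def using sum_mult_lin_comb[where a = "a k" and \<alpha> = 1 and x = p and \<beta> = t and y = w] by simp
  have ray: "(\<lambda>c. p c + t * w c) \<in> S \<longleftrightarrow> (\<forall>k<K. b k \<le> lhs k p + t * lhs k w)" for t
    using p w(1) unfolding S by (simp add: lhs_ray supp_in_def)
  have p_feas: "\<forall>k\<in>{..<K}. b k \<le> lhs k p" using p unfolding S lhs_def by simp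
  have "\<exists>k\<in>{..<K}. lhs k w < 0"
  proof (rule ccontr)
    assume "\<not> ?thesis"
    then have "(\<lambda>c. p c + t * w c) \<in> S" if "0 \<le> t" for t
      using p_feas that unfolding ray by (auto simp: not_less intro!: add_increasing2 mult_nonneg_nonneg)
    then show False using polytope_in_no_ray[OF P p, of w c0, OF w(2)] by blast
  qed
  moreover have "\<forall>k\<in>{..<K}. lhs k p = b k \<longrightarrow> lhs k w = 0" using tight unfolding lhs_def by simp
  ultimately obtain t where t: "t > 0" "\<forall>k\<in>{..<K}. b k \<le> lhs k p + t * lhs k w"
    "{k\<in>{..<K}. b k < lhs k p + t * lhs k w} \<subset> {k\<in>{..<K}. b k < lhs k p}"
    using ray_exit_step[of "{..<K}" b "\<lambda>k. lhs k p" "\<lambda>k. lhs k w"] p_feas by auto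
  show ?thesis
  proof (rule that)
    show "0 < t" "(\<lambda>c. p c + t * w c) \<in> S" using t(1,2) ray by simp_all
    show "card {k\<in>{..<K}. b k < (\<Sum>c\<in>I. a k c * (p c + t * w c))}
        < card {k\<in>{..<K}. b k < (\<Sum>c\<in>I. a k c * p c)}"
      using t(3) unfolding lhs_ray unfolding lhs_def by (intro psubset_card_mono) auto
  qed
qed

lemma polytope_non_vertex_split:
  fixes I :: "'a set" and K :: nat and a :: "nat \<Rightarrow> 'a \<Rightarrow> real" and b :: "nat \<Rightarrow> real"
  defines "slack v \<equiv> card {k\<in>{..<K}. b k < (\<Sum>c\<in>I. a k c * v c)}"
  assumes S: "S = {v. supp_in I v \<and> (\<forall>k<K. b k \<le> (\<Sum>c\<in>I. a k c * v c))}" and P: "polytope_in I S"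
    and p: "p \<in> S" and not_vertex: "\<not> is_vertex p S"
  obtains p1 p2 \<mu> where "p1 \<in> S" "p2 \<in> S" "slack p1 < slack p" "slack p2 < slack p"
    "0 \<le> \<mu>" "\<mu> \<le> 1" "p = (\<lambda>c. (1 - \<mu>) * p1 c + \<mu> * p2 c)"
proof -
  obtain x y \<theta> where xy: "x \<in> S" "y \<in> S" "x \<noteq> y" "0 < \<theta>" "\<theta> < 1"
    and p_eq: "p = (\<lambda>c. (1 - \<theta>) * x c + \<theta> * y c)"
    using p not_vertex unfolding is_vertex_def by blast
  define w1 where "w1 c = y c - x c" for c
  define w2 where "w2 c = x c - y c" for c
  obtain c0 where c0: "w1 c0 \<noteq> 0" "w2 c0 \<noteq> 0" using xy(3) unfolding w1_def w2_def by fastforce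
  have supp: "supp_in I w1" "supp_in I w2" using xy(1,2) unfolding S supp_in_def w1_def w2_def by auto
  have tight: "(\<Sum>c\<in>I. a k c * w1 c) = 0 \<and> (\<Sum>c\<in>I. a k c * w2 c) = 0"
    if "k < K" "(\<Sum>c\<in>I. a k c * p c) = b k" for k
  proof -
    have "(1 - \<theta>) * (\<Sum>c\<in>I. a k c * x c) + \<theta> * (\<Sum>c\<in>I. a k c * y c) = b k"
      using that(2) unfolding p_eq sum_mult_lin_comb .
    then have "(\<Sum>c\<in>I. a k c * x c) = b k" "(\<Sum>c\<in>I. a k c * y c) = b k"
      using convex_comb_eq_lower_bound xy that(1) unfolding S by auto
    then show ?thesis
      using sum_mult_lin_comb[where a = "a k" and \<alpha> = 1 and x = y and \<beta> = "-1" and y = x]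
        sum_mult_lin_comb[where a = "a k" and \<alpha> = 1 and x = x and \<beta> = "-1" and y = y]
      unfolding w1_def w2_def by simp
  qed
  obtain t1 where t1: "0 < t1" "(\<lambda>c. p c + t1 * w1 c) \<in> S" "slack (\<lambda>c. p c + t1 * w1 c) < slack p"
    unfolding slack_def by (rule polytope_ray_step[OF S P p supp(1) c0(1)]) (use tight in auto)
  obtain t2 where t2: "0 < t2" "(\<lambda>c. p c + t2 * w2 c) \<in> S" "slack (\<lambda>c. p c + t2 * w2 c) < slack p"
    unfolding slack_def by (rule polytope_ray_step[OF S P p supp(2) c0(2)]) (use tight in auto)
  define \<mu> where "\<mu> = t1 / (t1 + t2)"
  have "(1 - \<mu>) * t1 - \<mu> * t2 = 0" using t1(1) t2(1) unfolding \<mu>_def by (simp add: field_simps)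
  moreover have "(1 - \<mu>) * (p c + t1 * w1 c) + \<mu> * (p c + t2 * w2 c)
      = p c + ((1 - \<mu>) * t1 - \<mu> * t2) * w1 c" for c
    unfolding w1_def w2_def by (simp add: algebra_simps)
  ultimately have "p = (\<lambda>c. (1 - \<mu>) * (p c + t1 * w1 c) + \<mu> * (p c + t2 * w2 c))"
    by simp
  moreover have "0 \<le> \<mu>" "\<mu> \<le> 1" using t1(1) t2(1) unfolding \<mu>_def by simp_all
  ultimately show ?thesis by (intro that[OF t1(2) t2(2) t1(3) t2(3)])
qed

lemma polytope_in_conv_hull_vertices:
  assumes P: "polytope_in I S" and p: "p \<in> S"
  shows "p \<in> conv_hull {q. is_vertex q S}"
proof -
  obtain K a b where S: "S = {v. supp_in I v \<and> (\<forall>k<(K::nat). b k \<le> (\<Sum>c\<in>I. a k c * v c))}"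
    using P unfolding polytope_in_def polyhedron_in_def by blast
  show ?thesis
    using p
  proof (induction "card {k\<in>{..<K}. b k < (\<Sum>c\<in>I. a k c * p c)}" arbitrary: p rule: less_induct)
    case less
    show ?case
    proof (cases "is_vertex p S")
      case True
      then show ?thesis by (intro conv_hull_inc) simp
    next
      case False
      then obtain p1 p2 \<mu> where p12: "p1 \<in> S" "p2 \<in> S"
        "card {k\<in>{..<K}. b k < (\<Sum>c\<in>I. a k c * p1 c)} < card {k\<in>{..<K}. b k < (\<Sum>c\<in>I. a k c * p c)}"
        "card {k\<in>{..<K}. b k < (\<Sum>c\<in>I. a k c * p2 c)} < card {k\<in>{..<K}. b k < (\<Sum>c\<in>I. a k c * p c)}"
        and \<mu>: "0 \<le> \<mu>" "\<mu> \<le> 1" and p_eq: "p = (\<lambda>c. (1 - \<mu>) * p1 c + \<mu> * p2 c)"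
        by (rule polytope_non_vertex_split[OF S P less.prems])
      show ?thesis
        unfolding p_eq using less.hyps[OF p12(3,1)] less.hyps[OF p12(4,2)] \<mu>
        by (rule is_convexD[OF is_convex_conv_hull])
    qed
  qed
qed

lemma polytope_in_subset_conv_hull:
  assumes "polytope_in I S" "{q. is_vertex q S} \<subseteq> T"
  shows "S \<subseteq> conv_hull T"
  using polytope_in_conv_hull_vertices[OF assms(1)] conv_hull_mono[OF assms(2)] by blast

section \<open>Big-M formulations\<close>

definition affine_form :: "'a set \<Rightarrow> (('a \<Rightarrow> real) \<Rightarrow> real) \<Rightarrow> bool" where
  "affine_form I g \<longleftrightarrow> (\<exists>a b. \<forall>v. g v = b + (\<Sum>c\<in>I. a c * v c))"

lemma affine_form_const: "affine_form I (\<lambda>v. b)"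
  unfolding affine_form_def by (intro exI[of _ "\<lambda>_. 0"] exI[of _ b]) simp

lemma affine_form_coord:
  assumes "finite I" "c \<in> I"
  shows "affine_form I (\<lambda>v. v c)"
proof -
  have "(\<Sum>c'\<in>I. (if c' = c then 1 else 0) * v c') = (\<Sum>c'\<in>I. if c' = c then v c' else 0)"
    for v :: "'a \<Rightarrow> real"
    by (intro sum.cong) auto
  then have "(\<Sum>c'\<in>I. (if c' = c then 1 else 0) * v c') = v c" for v :: "'a \<Rightarrow> real"
    using assms by simp
  then show ?thesis
    unfolding affine_form_def by (intro exI[of _ "\<lambda>c'. if c' = c then 1 else 0"] exI[of _ 0]) simp
qed

lemma affine_form_add:
  assumes "affine_form I g" "affine_form I h"
  shows "affine_form I (\<lambda>v. g v + h v)"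
proof -
  obtain a b a' b' where "\<forall>v. g v = b + (\<Sum>c\<in>I. a c * v c)" "\<forall>v. h v = b' + (\<Sum>c\<in>I. a' c * v c)"
    using assms unfolding affine_form_def by blast
  then show ?thesis
    unfolding affine_form_def
    by (intro exI[of _ "\<lambda>c. a c + a' c"] exI[of _ "b + b'"]) (simp add: sum.distrib algebra_simps)
qed

lemma affine_form_scale:
  assumes "affine_form I g"
  shows "affine_form I (\<lambda>v. r * g v)"
proof -
  obtain a b where "\<forall>v. g v = b + (\<Sum>c\<in>I. a c * v c)"
    using assms unfolding affine_form_def by blast
  then show ?thesis
    unfolding affine_form_def
    by (intro exI[of _ "\<lambda>c. r * a c"] exI[of _ "r * b"]) (simp add: sum_distrib_left algebra_simps)
qed

lemma affine_form_diff:
  "affine_form I g \<Longrightarrow> affine_form I h \<Longrightarrow> affine_form I (\<lambda>v. g v - h v)"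
  using affine_form_add[of I g "\<lambda>v. -1 * h v"] affine_form_scale[of I h "-1"] by simp

lemma affine_form_sum:
  "finite F \<Longrightarrow> (\<And>s. s \<in> F \<Longrightarrow> affine_form I (g s)) \<Longrightarrow> affine_form I (\<lambda>v. \<Sum>s\<in>F. g s v)"
  by (induction F rule: finite_induct) (simp_all add: affine_form_const affine_form_add)

lemma polyhedron_in_affine_constraints:
  assumes I: "finite I" and F: "finite F" and aff: "\<forall>g\<in>F. affine_form I g"
  shows "polyhedron_in I {v. supp_in I v \<and> (\<forall>g\<in>F. 0 \<le> g v)}"
proof -
  have "\<forall>g\<in>F. \<exists>ab. \<forall>v. g v = snd ab + (\<Sum>c\<in>I. fst ab c * v c)"
    using aff unfolding affine_form_def by simp
  then obtain ab where ab: "\<forall>g\<in>F. \<forall>v. g v = snd (ab g) + (\<Sum>c\<in>I. fst (ab g) c * v c)"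
    by (rule bchoice[THEN exE])
  obtain e where e: "bij_betw e {..<card F} F"
    using ex_bij_betw_nat_finite[OF F] atLeast0LessThan by auto
  have "(\<forall>g\<in>F. 0 \<le> g v) \<longleftrightarrow>
      (\<forall>k<card F. - snd (ab (e k)) \<le> (\<Sum>c\<in>I. fst (ab (e k)) c * v c))" for v
  proof -
    have "(\<forall>g\<in>F. 0 \<le> g v) \<longleftrightarrow> (\<forall>g\<in>e ` {..<card F}. 0 \<le> g v)"
      using e by (simp add: bij_betw_def)
    also have "\<dots> \<longleftrightarrow> (\<forall>k<card F. 0 \<le> e k v)" by auto
    also have "\<dots> \<longleftrightarrow> (\<forall>k<card F. - snd (ab (e k)) \<le> (\<Sum>c\<in>I. fst (ab (e k)) c * v c))"
    proof -
      have "e k v = snd (ab (e k)) + (\<Sum>c\<in>I. fst (ab (e k)) c * v c)" if "k < card F" for k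
        using ab bij_betw_apply[OF e] that by blast
      then show ?thesis by force
    qed
    finally show ?thesis .
  qed
  then show ?thesis
    unfolding polyhedron_in_def using I
    by (intro conjI exI[of _ "card F"] exI[of _ "\<lambda>k. fst (ab (e k))"] exI[of _ "\<lambda>k. - snd (ab (e k))"]) simp_all
qed

definition ones_on :: "'a set \<Rightarrow> ('a \<Rightarrow> real) \<Rightarrow> 'a set" where
  "ones_on J v = {c\<in>J. v c = 1}"

text \<open>On points that are binary on J, the Hamming distance to the indicator of T.\<close>

definition hamming :: "'a set \<Rightarrow> 'a set \<Rightarrow> ('a \<Rightarrow> real) \<Rightarrow> real" where
  "hamming J T v = (\<Sum>c\<in>J. if c \<in> T then 1 - v c else v c)"

lemma affine_form_hamming:
  assumes "finite I" "J \<subseteq> I"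
  shows "affine_form I (hamming J T)"
proof -
  have "affine_form I (\<lambda>v. if c \<in> T then 1 - v c else v c)" if "c \<in> J" for c
  proof -
    have "affine_form I (\<lambda>v. v c)" using assms that by (intro affine_form_coord) auto
    then show ?thesis by (cases "c \<in> T") (simp_all add: affine_form_diff[OF affine_form_const])
  qed
  then show ?thesis
    unfolding hamming_def using assms finite_subset by (intro affine_form_sum) auto
qed

lemma hamming_ones_on: "\<forall>c\<in>J. v c \<in> {0, 1} \<Longrightarrow> hamming J (ones_on J v) v = 0"
  unfolding hamming_def ones_on_def by (intro sum.neutral) auto

lemma hamming_ge_1:
  assumes "finite J" "\<forall>c\<in>J. v c \<in> {0, 1}" "T \<subseteq> J" "T \<noteq> ones_on J v"
  shows "1 \<le> hamming J T v"
proof -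
  obtain c0 where "c0 \<in> J" "c0 \<in> T \<longleftrightarrow> c0 \<notin> ones_on J v"
    using assms(3,4) unfolding ones_on_def by blast
  then have c0: "c0 \<in> J" "c0 \<in> T \<longleftrightarrow> v c0 = 0"
    using assms(2) unfolding ones_on_def by auto
  have "(\<lambda>c. if c \<in> T then 1 - v c else v c) c0 \<le> hamming J T v"
    unfolding hamming_def using assms(1,2) c0(1) by (intro member_le_sum) auto
  then show ?thesis using assms(2) c0 by auto
qed

text \<open>Binary patterns T not attained by E are cut off by \<open>hamming J T v \<ge> 1\<close>; a point
  with the pattern of s in E is pinned to s, and once M bounds the coordinate differences within
  E, the constraints with a different pattern are slack at s.\<close>

definition big_M_polyhedron :: "'a set \<Rightarrow> 'a set \<Rightarrow> ('a \<Rightarrow> real) set \<Rightarrow> real \<Rightarrow> ('a \<Rightarrow> real) set" where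
  "big_M_polyhedron I J E M = {v. supp_in I v \<and>
     (\<forall>T\<in>Pow J - ones_on J ` E. 1 \<le> hamming J T v) \<and>
     (\<forall>s\<in>E. \<forall>c\<in>I. \<bar>v c - s c\<bar> \<le> M * hamming J (ones_on J s) v)}"

lemma polyhedron_in_big_M_polyhedron:
  assumes I: "finite I" and JI: "J \<subseteq> I" and E: "finite E"
  shows "polyhedron_in I (big_M_polyhedron I J E M)"
proof -
  define F1 where "F1 = (\<lambda>T v. hamming J T v - 1) ` (Pow J - ones_on J ` E)"
  define F2 where "F2 = (\<lambda>(s, c, \<sigma>) v. M * hamming J (ones_on J s) v - \<sigma> * (v c - s c)) ` (E \<times> I \<times> {1, -1})"
  have ball_image: "(\<forall>g\<in>f ` A. P g) \<longleftrightarrow> (\<forall>x\<in>A. P (f x))" for f :: "'b \<Rightarrow> ('a \<Rightarrow> real) \<Rightarrow> real" and A P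
    by blast
  have "big_M_polyhedron I J E M = {v. supp_in I v \<and> (\<forall>g\<in>F1 \<union> F2. 0 \<le> g v)}"
    unfolding big_M_polyhedron_def F1_def F2_def ball_Un ball_image by (auto simp: abs_le_iff algebra_simps)
  also have "polyhedron_in I \<dots>"
  proof (rule polyhedron_in_affine_constraints[OF I])
    have "finite J" using I JI finite_subset by blast
    then show "finite (F1 \<union> F2)" unfolding F1_def F2_def using I E by simp
    show "\<forall>g\<in>F1 \<union> F2. affine_form I g"
      unfolding F1_def F2_def using I JI
      by (auto intro!: affine_form_diff affine_form_scale affine_form_hamming affine_form_const affine_form_coord)
  qed
  finally show ?thesis .
qed

lemma ones_on_inj_on:
  assumes bin: "\<forall>s\<in>E. \<forall>c\<in>J. s c \<in> {0, 1}" and det: "\<forall>s\<in>E. \<forall>s'\<in>E. (\<forall>c\<in>J. s c = s' c) \<longrightarrow> s = s'"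
  shows "inj_on (ones_on J) E"
proof (rule inj_onI)
  fix s s' assume s: "s \<in> E" "s' \<in> E" and eq: "ones_on J s = ones_on J s'"
  have "s c = s' c" if "c \<in> J" for c
  proof -
    have "s c = 1 \<longleftrightarrow> s' c = 1" using eq that unfolding ones_on_def by blast
    moreover have "s c \<in> {0, 1}" "s' c \<in> {0, 1}" using bin s that by auto
    ultimately show ?thesis by auto
  qed
  then show "s = s'" using det s by blast
qed

lemma subset_big_M_polyhedron:
  assumes J: "finite J" and supp: "\<forall>s\<in>E. supp_in I s" and bin: "\<forall>s\<in>E. \<forall>c\<in>J. s c \<in> {0, 1}"
    and inj: "inj_on (ones_on J) E" and M: "\<forall>s\<in>E. \<forall>s'\<in>E. \<forall>c\<in>I. \<bar>s c - s' c\<bar> \<le> M"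
  shows "E \<subseteq> big_M_polyhedron I J E M"
proof
  fix s assume s: "s \<in> E"
  have bin_s: "\<forall>c\<in>J. s c \<in> {0, 1}" using bin s by blast
  have "1 \<le> hamming J T s" if "T \<in> Pow J - ones_on J ` E" for T
  proof (rule hamming_ge_1[OF J bin_s])
    show "T \<subseteq> J" "T \<noteq> ones_on J s" using that s by auto
  qed
  moreover have "\<bar>s c - s' c\<bar> \<le> M * hamming J (ones_on J s') s" if s': "s' \<in> E" "c \<in> I" for s' c
  proof (cases "ones_on J s' = ones_on J s")
    case True
    then have "s' = s" using inj s s'(1) by (simp add: inj_on_eq_iff)
    then show ?thesis using hamming_ones_on[OF bin_s] by simp
  next
    case False
    have "1 \<le> hamming J (ones_on J s') s"
    proof (rule hamming_ge_1[OF J bin_s])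
      show "ones_on J s' \<subseteq> J" "ones_on J s' \<noteq> ones_on J s" using False unfolding ones_on_def by auto
    qed
    moreover have "\<bar>s c - s' c\<bar> \<le> M" using M s s' by blast
    ultimately have "M * 1 \<le> M * hamming J (ones_on J s') s"
      by (intro mult_left_mono) auto
    then show ?thesis using \<open>\<bar>s c - s' c\<bar> \<le> M\<close> by simp
  qed
  ultimately show "s \<in> big_M_polyhedron I J E M"
    using supp s unfolding big_M_polyhedron_def by blast
qed

lemma big_M_polyhedron_binary_subset:
  assumes supp: "\<forall>s\<in>E. supp_in I s"
  shows "big_M_polyhedron I J E M \<inter> {v. \<forall>c\<in>J. v c \<in> {0, 1}} \<subseteq> E"
proof
  fix v assume "v \<in> big_M_polyhedron I J E M \<inter> {v. \<forall>c\<in>J. v c \<in> {0, 1}}"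
  then have v: "v \<in> big_M_polyhedron I J E M" and bin: "\<forall>c\<in>J. v c \<in> {0, 1}" by auto
  have h0: "hamming J (ones_on J v) v = 0" using hamming_ones_on bin .
  have "ones_on J v \<in> ones_on J ` E"
  proof (rule ccontr)
    assume "ones_on J v \<notin> ones_on J ` E"
    moreover have "ones_on J v \<in> Pow J" unfolding ones_on_def by blast
    ultimately have "1 \<le> hamming J (ones_on J v) v" using v unfolding big_M_polyhedron_def by blast
    then show False using h0 by simp
  qed
  then obtain s where s: "s \<in> E" "ones_on J s = ones_on J v" by force
  have "v c = s c" for c
  proof (cases "c \<in> I")
    case True
    then have "\<bar>v c - s c\<bar> \<le> 0" using v s h0 unfolding big_M_polyhedron_def by force
    then show ?thesis by simp
  next
    case False
    then show ?thesis using v supp s unfolding big_M_polyhedron_def supp_in_def by auto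
  qed
  then have "v = s" by (rule ext)
  then show "v \<in> E" using s by simp
qed

lemma binary_determined_mip_representable:
  assumes I: "finite I" and JI: "J \<subseteq> I" and supp: "\<forall>s\<in>E. supp_in I s"
    and bin: "\<forall>s\<in>E. \<forall>c\<in>J. s c \<in> {0, 1}"
    and det: "\<forall>s\<in>E. \<forall>s'\<in>E. (\<forall>c\<in>J. s c = s' c) \<longrightarrow> s = s'"
  shows "\<exists>R. polyhedron_in I R \<and> E = R \<inter> {v. \<forall>c\<in>J. v c \<in> {0, 1}}"
proof -
  have J: "finite J" using I JI finite_subset by blast
  have inj: "inj_on (ones_on J) E" using bin det by (rule ones_on_inj_on)
  moreover have "ones_on J ` E \<subseteq> Pow J" unfolding ones_on_def by auto
  ultimately have E: "finite E" using J by (meson finite_Pow_iff inj_on_finite)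
  define M where "M = Max ((\<lambda>(s, s', c). \<bar>s c - s' c\<bar>) ` (E \<times> E \<times> I))"
  have "\<bar>s c - s' c\<bar> \<le> M" if "s \<in> E" "s' \<in> E" "c \<in> I" for s s' c
  proof -
    have "\<bar>s c - s' c\<bar> \<in> (\<lambda>(s, s', c). \<bar>s c - s' c\<bar>) ` (E \<times> E \<times> I)"
      using that by (intro image_eqI[where x = "(s, s', c)"]) auto
    then show ?thesis unfolding M_def using E I by (intro Max_ge) simp_all
  qed
  then have "E \<subseteq> big_M_polyhedron I J E M" using subset_big_M_polyhedron[OF J supp bin inj] by blast
  then have "E = big_M_polyhedron I J E M \<inter> {v. \<forall>c\<in>J. v c \<in> {0, 1}}"
    using big_M_polyhedron_binary_subset[OF supp] bin by blast
  then show ?thesis using polyhedron_in_big_M_polyhedron[OF I JI E] by blast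
qed

section \<open>The simplex \<open>Delta_simplex d\<close>\<close>

definition step_vertex :: "nat \<Rightarrow> nat \<Rightarrow> real" where
  "step_vertex k = (\<lambda>j. if 1 \<le> j \<and> j \<le> k then 1 else 0)"

lemma Delta_simplex_antimono:
  assumes z: "z \<in> Delta_simplex d" and ij: "1 \<le> i" "i \<le> j" "j \<le> d"
  shows "z j \<le> z i"
  using ij
proof (induction j)
  case 0
  then show ?case by simp
next
  case (Suc j)
  show ?case
  proof (cases "i = Suc j")
    case False
    then have "z (Suc j) \<le> z j" using z Suc.prems unfolding Delta_simplex_def by auto
    then show ?thesis using Suc False by simp
  qed simp
qed

lemma Delta_simplex_bounds:
  assumes z: "z \<in> Delta_simplex d"
  shows "0 \<le> z j \<and> z j \<le> 1"
proof (cases "1 \<le> j \<and> j \<le> d")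
  case True
  then have "z d \<le> z j" "z j \<le> z 1" using Delta_simplex_antimono[OF z] by auto
  moreover have "z 1 \<le> 1" "0 \<le> z d" using z True unfolding Delta_simplex_def by auto
  ultimately show ?thesis by simp
next
  case False
  then show ?thesis using z unfolding Delta_simplex_def supp_in_def by auto
qed

lemma step_vertex_in_vert_simplex: "k \<le> d \<Longrightarrow> step_vertex k \<in> vert_simplex d"
  unfolding vert_simplex_def Delta_simplex_def supp_in_def step_vertex_def by auto

lemma vert_simplex_step_vertex:
  assumes z: "z \<in> vert_simplex d"
  obtains k where "k \<le> d" "z = step_vertex k"
proof -
  have zD: "z \<in> Delta_simplex d" and bin: "\<forall>j\<in>{1..d}. z j \<in> {0, 1}"
    using z unfolding vert_simplex_def by auto
  define k where "k = Max (insert 0 {j\<in>{1..d}. z j = 1})"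
  have k_max: "k \<in> insert 0 {j\<in>{1..d}. z j = 1}"
    unfolding k_def by (intro Max_in) auto
  then have "k \<le> d" by auto
  have "z j = step_vertex k j" for j
  proof (cases "1 \<le> j \<and> j \<le> d")
    case True
    show ?thesis
    proof (cases "j \<le> k")
      case True
      then have "k \<noteq> 0" using \<open>1 \<le> j \<and> j \<le> d\<close> by simp
      then have "z k = 1" "1 \<le> k" using k_max by auto
      then show ?thesis
        using Delta_simplex_antimono[OF zD, of j k] Delta_simplex_bounds[OF zD, of j] True \<open>k \<le> d\<close>
          \<open>1 \<le> j \<and> j \<le> d\<close> unfolding step_vertex_def by simp
    next
      case False
      then have "z j \<noteq> 1" unfolding k_def using \<open>1 \<le> j \<and> j \<le> d\<close> by (auto simp: not_le)
      then show ?thesis using bin True False unfolding step_vertex_def by auto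
    qed
  next
    case False
    then show ?thesis using zD k_max unfolding Delta_simplex_def supp_in_def step_vertex_def by auto
  qed
  then show ?thesis using that \<open>k \<le> d\<close> by blast
qed

lemma is_convex_Delta_simplex: "is_convex (Delta_simplex d)"
  unfolding is_convex_def
proof (intro ballI allI impI)
  fix a b and \<theta> :: real
  assume a: "a \<in> Delta_simplex d" and b: "b \<in> Delta_simplex d" and \<theta>: "0 \<le> \<theta> \<and> \<theta> \<le> 1"
  have "(1 - \<theta>) * a j + \<theta> * b j \<le> (1 - \<theta>) * a i + \<theta> * b i" if "a j \<le> a i" "b j \<le> b i" for i j
    using that \<theta> by (intro add_mono mult_left_mono) auto
  moreover have "(1 - \<theta>) * a 1 + \<theta> * b 1 \<le> 1" if "1 \<le> d"
    using a b that \<theta> unfolding Delta_simplex_def by (intro convex_bound_le) auto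
  ultimately show "(\<lambda>c. (1 - \<theta>) * a c + \<theta> * b c) \<in> Delta_simplex d"
    using a b \<theta> unfolding Delta_simplex_def supp_in_def by auto
qed

lemma sum_diff_step_vertex:
  fixes g :: "nat \<Rightarrow> real"
  assumes "k \<le> d"
  shows "(\<Sum>j\<in>{1..d}. (g j - g (j - 1)) * step_vertex k j) = g k - g 0"
proof -
  have "(\<Sum>j\<in>{1..d}. (g j - g (j - 1)) * step_vertex k j) = (\<Sum>j\<in>{1..k}. g j - g (j - 1))"
    using assms by (intro sum.mono_neutral_cong_right) (auto simp: step_vertex_def)
  also have "\<dots> = g k - g 0"
    by (induction k) (simp_all add: atLeastAtMostSuc_conv)
  finally show ?thesis .
qed

text \<open>The mass that a convex combination of step vertices puts on the vertices
  \<open>step_vertex k\<close> with \<open>k \<ge> j\<close> is the j-th coordinate of the resulting point.\<close>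

lemma step_vertex_weights_unique:
  fixes u :: "'l \<Rightarrow> real" and \<alpha> :: "'s \<Rightarrow> real"
  assumes L: "finite L" "sum u L = 1" "\<forall>l\<in>L. \<kappa> l \<le> d"
    and S: "finite S" "sum \<alpha> S = 1" "\<forall>s\<in>S. \<kappa>' s \<le> d"
    and eq: "\<forall>j\<in>{1..d}. (\<Sum>l\<in>L. u l * step_vertex (\<kappa> l) j) = (\<Sum>s\<in>S. \<alpha> s * step_vertex (\<kappa>' s) j)"
  shows "(\<Sum>l\<in>{l\<in>L. \<kappa> l = k}. u l) = (\<Sum>s\<in>{s\<in>S. \<kappa>' s = k}. \<alpha> s)"
proof -
  have tail: "(\<Sum>l\<in>{l\<in>L. j \<le> \<kappa> l}. u l) = (\<Sum>s\<in>{s\<in>S. j \<le> \<kappa>' s}. \<alpha> s)" for j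
  proof -
    have step: "(\<Sum>l\<in>L'. w l * step_vertex (\<rho> l) j) = (\<Sum>l\<in>{l\<in>L'. j \<le> \<rho> l}. w l)"
      if "finite L'" "1 \<le> j" for L' and w :: "_ \<Rightarrow> real" and \<rho>
      using that by (simp add: sum.inter_filter step_vertex_def if_distrib cong: if_cong)
    consider "j = 0" | "1 \<le> j" "j \<le> d" | "d < j" by linarith
    then show ?thesis
    proof cases
      case 1
      then show ?thesis using L S by simp
    next
      case 2
      then have "(\<Sum>l\<in>L. u l * step_vertex (\<kappa> l) j) = (\<Sum>s\<in>S. \<alpha> s * step_vertex (\<kappa>' s) j)"
        using eq by simp
      then show ?thesis using step[OF L(1) 2(1)] step[OF S(1) 2(1)] by simp
    next
      case 3
      then have "{l\<in>L. j \<le> \<kappa> l} = {}" "{s\<in>S. j \<le> \<kappa>' s} = {}" using L(3) S(3) by force+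
      then show ?thesis by (metis sum.empty)
    qed
  qed
  have split: "(\<Sum>l\<in>{l\<in>L'. k \<le> \<rho> l}. w l) = (\<Sum>l\<in>{l\<in>L'. \<rho> l = k}. w l) + (\<Sum>l\<in>{l\<in>L'. k + 1 \<le> \<rho> l}. w l)"
    if "finite L'" for L' and w :: "_ \<Rightarrow> real" and \<rho> :: "_ \<Rightarrow> nat"
  proof -
    have "{l\<in>L'. k \<le> \<rho> l} = {l\<in>L'. \<rho> l = k} \<union> {l\<in>L'. k + 1 \<le> \<rho> l}" by auto
    then show ?thesis using that by (subst sum.union_disjoint[symmetric]) auto
  qed
  show ?thesis using tail[of k] tail[of "k + 1"] split[OF L(1)] split[OF S(1)] by simp
qed

lemma vert_simplex_convex_sum_eq:
  assumes F: "finite F" and \<alpha>: "\<forall>s\<in>F. 0 \<le> \<alpha> s" "sum \<alpha> F = 1"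
    and y: "\<forall>s\<in>F. y s \<in> Delta_simplex d" and vert: "(\<lambda>j. \<Sum>s\<in>F. \<alpha> s * y s j) \<in> vert_simplex d"
    and s: "s \<in> F" "0 < \<alpha> s"
  shows "y s = (\<lambda>j. \<Sum>s\<in>F. \<alpha> s * y s j)"
proof
  fix j
  show "y s j = (\<Sum>s\<in>F. \<alpha> s * y s j)"
  proof (cases "j \<in> {1..d}")
    case True
    then show ?thesis
      using vert Delta_simplex_bounds y unfolding vert_simplex_def
      by (intro convex_sum_binary_forces[OF F \<alpha> _ _ s]) auto
  next
    case False
    then show ?thesis using y s unfolding Delta_simplex_def supp_in_def by simp
  qed
qed

lemma vert_simplex_eq_step_vertex_card:
  assumes "z \<in> vert_simplex d"
  shows "card (ones_on {1..d} z) \<le> d" "z = step_vertex (card (ones_on {1..d} z))"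
proof -
  obtain k where k: "k \<le> d" "z = step_vertex k" using assms by (rule vert_simplex_step_vertex)
  then have "ones_on {1..d} z = {1..k}" unfolding ones_on_def step_vertex_def by auto
  then show "card (ones_on {1..d} z) \<le> d" "z = step_vertex (card (ones_on {1..d} z))" using k by simp_all
qed

section \<open>The formulation E\<close>

lemma coord_mem_simps [simp]:
  "X i \<in> IX n \<longleftrightarrow> i \<in> {1..n}" "Z i j \<notin> IX n" "Mu t \<notin> IX n" "Dl i k \<notin> IX n"
  "Z i j \<in> IZ n d \<longleftrightarrow> i \<in> {1..n} \<and> j \<in> {1..d i}" "X i \<notin> IZ n d" "Mu t \<notin> IZ n d" "Dl i k \<notin> IZ n d"
  "Mu t \<in> IM m \<longleftrightarrow> t \<in> {1..m}" "X i \<notin> IM m" "Z i j \<notin> IM m" "Dl i k \<notin> IM m"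
  "Dl i k \<in> ID n r \<longleftrightarrow> i \<in> {1..n} \<and> k \<in> {1..r i}" "X i \<notin> ID n r" "Z i j \<notin> ID n r" "Mu t \<notin> ID n r"
  unfolding IX_def IZ_def IM_def ID_def by auto

lemma finite_coords: "finite (IX n \<union> IZ n d \<union> IM m \<union> ID n r)"
proof -
  have "IZ n d = (\<lambda>(i, j). Z i j) ` (SIGMA i:{1..n}. {1..d i})"
    "ID n r = (\<lambda>(i, k). Dl i k) ` (SIGMA i:{1..n}. {1..r i})"
    unfolding IZ_def ID_def by auto
  then show ?thesis unfolding IX_def IM_def by simp
qed

lemma sum_diff_step_vertex_ell:
  "k \<le> d i \<Longrightarrow> ell d p f t i (step_vertex k) = f t i (p i k)"
  unfolding ell_def using sum_diff_step_vertex[of k "d i" "\<lambda>j. f t i (p i j)"] by simp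

lemma Bset_convex_comb:
  assumes a: "(xa, za) \<in> Bset d p i" and b: "(xb, zb) \<in> Bset d p i" and \<theta>: "0 \<le> \<theta>" "\<theta> \<le> 1"
  shows "((1 - \<theta>) * xa + \<theta> * xb, \<lambda>j. (1 - \<theta>) * za j + \<theta> * zb j) \<in> Bset d p i"
proof -
  define Sa where "Sa = (\<Sum>j\<in>{1..d i}. (p i j - p i (j - 1)) * za j)"
  define Sb where "Sb = (\<Sum>j\<in>{1..d i}. (p i j - p i (j - 1)) * zb j)"
  have "(\<Sum>j\<in>{1..d i}. (p i j - p i (j - 1)) * ((1 - \<theta>) * za j + \<theta> * zb j)) = (1 - \<theta>) * Sa + \<theta> * Sb"
    unfolding Sa_def Sb_def by (rule sum_mult_lin_comb)
  moreover have "xa = p i 0 + Sa" "xb = p i 0 + Sb"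
    using a b unfolding Bset_def Sa_def Sb_def by simp_all
  moreover have "(\<lambda>j. (1 - \<theta>) * za j + \<theta> * zb j) \<in> Delta_simplex (d i)"
    using a b \<theta> is_convexD[OF is_convex_Delta_simplex] unfolding Bset_def by simp
  ultimately show ?thesis unfolding Bset_def by (simp add: algebra_simps)
qed

locale mip_data =
  fixes n m :: nat and d r :: "nat \<Rightarrow> nat" and p :: "nat \<Rightarrow> nat \<Rightarrow> real"
    and f :: "nat \<Rightarrow> nat \<Rightarrow> real \<Rightarrow> real" and \<phi> :: "nat \<Rightarrow> (nat \<Rightarrow> real) \<Rightarrow> real"
    and Q :: "nat \<Rightarrow> (nat + nat \<Rightarrow> real) set"
  assumes Q_polytope: "\<forall>i\<in>{1..n}. polytope_in (Inl ` {1..d i} \<union> Inr ` {1..r i}) (Q i)"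
    and Q_binary_proj: "\<forall>i\<in>{1..n}. (\<lambda>q j. q (Inl j)) ` (Q i \<inter> {q. \<forall>k\<in>{1..r i}. q (Inr k) \<in> {0, 1}})
                           = vert_simplex (d i)"
begin

abbreviation "G \<equiv> Gset n m d p f \<phi>"
abbreviation "Rel P \<equiv> Erel n m d p r f \<phi> P Q"
abbreviation "coords \<equiv> IX n \<union> IZ n d \<union> IM m \<union> ID n r"
abbreviation "zm_coords \<equiv> IZ n d \<union> IM m"

lemma Q_supp: "i \<in> {1..n} \<Longrightarrow> q \<in> Q i \<Longrightarrow> supp_in (Inl ` {1..d i} \<union> Inr ` {1..r i}) q"
  using Q_polytope polyhedron_in_supp unfolding polytope_in_def by blast

lemma Q_convex: "i \<in> {1..n} \<Longrightarrow> is_convex (Q i)"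
  using Q_polytope polyhedron_in_is_convex unfolding polytope_in_def by blast

lemma Q_binary_vert:
  "i \<in> {1..n} \<Longrightarrow> q \<in> Q i \<Longrightarrow> \<forall>k\<in>{1..r i}. q (Inr k) \<in> {0, 1} \<Longrightarrow> (\<lambda>j. q (Inl j)) \<in> vert_simplex (d i)"
  using Q_binary_proj by blast

lemma Rel_supp: "v \<in> Rel P \<Longrightarrow> supp_in coords v"
  unfolding Erel_def by simp

lemma restr_zm_coords:
  assumes "supp_in coords v"
  shows "restr zm_coords v (Z i j) = v (Z i j)" "restr zm_coords v (Mu t) = v (Mu t)"
    "zvec (restr zm_coords v) i = zvec v i"
  using assms unfolding restr_def supp_in_def zvec_def by auto

lemma Gset_supp: "u \<in> G \<Longrightarrow> supp_in zm_coords u"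
  unfolding Gset_def by simp

lemma conv_hull_Gset_supp: "u \<in> conv_hull G \<Longrightarrow> supp_in zm_coords u"
  by (erule conv_hullE) (auto simp: supp_in_def Gset_def)

lemma Gset_eqI:
  assumes "u \<in> G" "u' \<in> G" "\<forall>i\<in>{1..n}. zvec u i = zvec u' i"
  shows "u = u'"
proof
  fix c
  show "u c = u' c"
  proof (cases c)
    case (Z i j)
    then show ?thesis using assms unfolding Gset_def supp_in_def zvec_def by (cases "i \<in> {1..n}") (auto dest: fun_cong)
  next
    case (Mu t)
    have "(\<lambda>i. if i \<in> {1..n} then ell d p f t i (zvec u i) else 0)
        = (\<lambda>i. if i \<in> {1..n} then ell d p f t i (zvec u' i) else 0)"
      using assms(3) by auto
    then show ?thesis using assms Mu unfolding Gset_def supp_in_def by (cases "t \<in> {1..m}") auto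
  qed (use assms in \<open>auto simp: Gset_def supp_in_def\<close>)
qed

text \<open>Every point of G with positive weight has the binary z-part of u, and points of G
  are determined by their z-part.\<close>

lemma conv_hull_Gset_vert:
  assumes u: "u \<in> conv_hull G" and vert: "\<forall>i\<in>{1..n}. zvec u i \<in> vert_simplex (d i)"
  shows "u \<in> G"
proof -
  obtain K \<beta> g where g: "\<forall>l<(K::nat). 0 \<le> \<beta> l \<and> g l \<in> G" "(\<Sum>l<K. \<beta> l) = 1"
    and u_eq: "u = (\<lambda>c. \<Sum>l<K. \<beta> l * g l c)"
    using u by (rule conv_hullE)
  have zvec_g: "zvec (g l) i = zvec u i" if "l < K" "0 < \<beta> l" "i \<in> {1..n}" for l i
  proof -
    have u_i: "zvec u i = (\<lambda>j. \<Sum>l<K. \<beta> l * zvec (g l) i j)" unfolding u_eq zvec_def by simp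
    have "\<forall>l<K. zvec (g l) i \<in> Delta_simplex (d i)"
      using g(1) that(3) unfolding Gset_def vert_simplex_def by auto
    moreover have "(\<lambda>j. \<Sum>l<K. \<beta> l * zvec (g l) i j) \<in> vert_simplex (d i)"
      unfolding u_i[symmetric] using vert that(3) by blast
    ultimately show ?thesis
      unfolding u_i using vert_simplex_convex_sum_eq[of "{..<K}" \<beta> "\<lambda>l. zvec (g l) i" "d i" l] g that
      by simp
  qed
  obtain l0 where l0: "l0 < K" "0 < \<beta> l0"
    using g by (metis finite_lessThan less_eq_real_def lessThan_iff sum_nonneg_eq_0_iff zero_neq_one)
  have same: "\<beta> l * g l c = \<beta> l * g l0 c" if "l < K" for l c
  proof (cases "0 < \<beta> l")
    case True
    then have "g l = g l0" using g(1) that l0 by (intro Gset_eqI) (auto simp: zvec_g)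
    then show ?thesis by simp
  next
    case False
    then show ?thesis using g(1) that by (simp add: not_less order.antisym)
  qed
  have "u = (\<lambda>c. \<Sum>l<K. \<beta> l * g l0 c)" unfolding u_eq by (intro ext sum.cong refl same) simp
  also have "\<dots> = g l0" using g(2) by (simp flip: sum_distrib_right)
  finally have "u = g l0" .
  then show ?thesis using g l0 by simp
qed


text \<open>The point with (z, mu)-part g and delta-parts read off D, with x-part forced by
  \<open>Bset\<close>; every point of the relaxation is of this form.\<close>

definition lift :: "(coord \<Rightarrow> real) \<Rightarrow> (nat \<Rightarrow> nat + nat \<Rightarrow> real) \<Rightarrow> coord \<Rightarrow> real" where
  "lift g D c = (case c of
      X i \<Rightarrow> if i \<in> {1..n} then p i 0 + (\<Sum>j\<in>{1..d i}. (p i j - p i (j - 1)) * g (Z i j)) else 0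
    | Z i j \<Rightarrow> g (Z i j)
    | Mu t \<Rightarrow> g (Mu t)
    | Dl i k \<Rightarrow> if i \<in> {1..n} \<and> k \<in> {1..r i} then D i (Inr k) else 0)"

lemma lift_simps [simp]:
  "lift g D (X i) = (if i \<in> {1..n} then p i 0 + (\<Sum>j\<in>{1..d i}. (p i j - p i (j - 1)) * g (Z i j)) else 0)"
  "lift g D (Z i j) = g (Z i j)" "lift g D (Mu t) = g (Mu t)"
  "lift g D (Dl i k) = (if i \<in> {1..n} \<and> k \<in> {1..r i} then D i (Inr k) else 0)"
  unfolding lift_def by simp_all

lemma lift_cong_delta:
  "\<forall>i\<in>{1..n}. \<forall>k\<in>{1..r i}. D i (Inr k) = D' i (Inr k) \<Longrightarrow> lift g D = lift g D'"
  unfolding lift_def by (auto split: coord.split)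

lemma restr_lift:
  assumes "supp_in zm_coords g"
  shows "restr zm_coords (lift g D) = g"
proof
  fix c
  show "restr zm_coords (lift g D) c = g c"
    using assms unfolding restr_def supp_in_def by (cases c) auto
qed

lemma Rel_eq_lift:
  assumes v: "v \<in> Rel P"
  shows "v = lift (restr zm_coords v) (zdvec v)"
proof
  fix c
  have supp: "supp_in coords v" using v by (rule Rel_supp)
  show "v c = lift (restr zm_coords v) (zdvec v) c"
  proof (cases c)
    case (X i)
    have "v (X i) = p i 0 + (\<Sum>j\<in>{1..d i}. (p i j - p i (j - 1)) * v (Z i j))" if "i \<in> {1..n}"
      using v that unfolding Erel_def Bset_def zvec_def by auto
    then show ?thesis using X supp restr_zm_coords[OF supp] unfolding supp_in_def by simp
  next
    case (Dl i k)
    then show ?thesis using supp unfolding supp_in_def zdvec_def by auto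
  qed (use restr_zm_coords[OF supp] in simp_all)
qed

lemma lift_in_Rel:
  assumes g: "g \<in> conv_hull G" and P: "(\<lambda>i. lift g D (X i)) \<in> P"
    and Delta: "\<forall>i\<in>{1..n}. zvec g i \<in> Delta_simplex (d i)"
    and D: "\<forall>i\<in>{1..n}. D i \<in> Q i \<and> (\<lambda>j. D i (Inl j)) = zvec g i"
  shows "lift g D \<in> Rel P"
proof -
  have g_supp: "supp_in zm_coords g" using g by (rule conv_hull_Gset_supp)
  have "supp_in coords (lift g D)"
    unfolding supp_in_def
  proof (intro allI impI)
    fix c assume "c \<notin> coords"
    then show "lift g D c = 0" using g_supp unfolding supp_in_def by (cases c) auto
  qed
  moreover have "restr zm_coords (lift g D) = g" using g_supp by (rule restr_lift)
  moreover have "zdvec (lift g D) i = D i" if i: "i \<in> {1..n}" for i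
  proof
    fix q
    show "zdvec (lift g D) i q = D i q"
    proof (cases q)
      case (Inl j)
      have "(\<lambda>j. D i (Inl j)) = zvec g i" using D i by blast
      from fun_cong[OF this, of j] show ?thesis using Inl unfolding zdvec_def zvec_def by simp
    next
      case (Inr k)
      have "supp_in (Inl ` {1..d i} \<union> Inr ` {1..r i}) (D i)" using Q_supp[OF i] D i by blast
      then show ?thesis using Inr i unfolding zdvec_def supp_in_def by auto
    qed
  qed
  moreover have "(lift g D (X i), zvec (lift g D) i) \<in> Bset d p i" if "i \<in> {1..n}" for i
    using Delta that unfolding Bset_def zvec_def by simp
  ultimately show ?thesis using g P D unfolding Erel_def by auto
qed

lemma lift_convex_sum:
  assumes "finite F" "sum u F = 1"
  shows "(\<lambda>c. \<Sum>s\<in>F. u s * lift (g s) (D s) c)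
       = lift (\<lambda>c. \<Sum>s\<in>F. u s * g s c) (\<lambda>i q. \<Sum>s\<in>F. u s * D s i q)"
proof
  fix c
  show "(\<Sum>s\<in>F. u s * lift (g s) (D s) c) = lift (\<lambda>c. \<Sum>s\<in>F. u s * g s c) (\<lambda>i q. \<Sum>s\<in>F. u s * D s i q) c"
  proof (cases c)
    case (X i)
    have "(\<Sum>s\<in>F. u s * (p i 0 + (\<Sum>j\<in>{1..d i}. (p i j - p i (j - 1)) * g s (Z i j))))
        = p i 0 + (\<Sum>j\<in>{1..d i}. (p i j - p i (j - 1)) * (\<Sum>s\<in>F. u s * g s (Z i j)))"
      using assms by (simp add: distrib_left sum.distrib sum_distrib_left sum_distrib_right
          sum.swap[of _ F] algebra_simps flip: sum_distrib_right)
    then show ?thesis using X by (cases "i \<in> {1..n}") auto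
  qed auto
qed

lemma Rel_is_convex:
  assumes P: "is_convex P"
  shows "is_convex (Rel P)"
  unfolding is_convex_def
proof (intro ballI allI impI)
  fix a b and \<theta> :: real
  assume a: "a \<in> Rel P" and b: "b \<in> Rel P" and \<theta>: "0 \<le> \<theta> \<and> \<theta> \<le> 1"
  define v where "v = (\<lambda>c. (1 - \<theta>) * a c + \<theta> * b c)"
  have "supp_in coords v" using Rel_supp[OF a] Rel_supp[OF b] unfolding supp_in_def v_def by simp
  moreover have "restr zm_coords v \<in> conv_hull G"
  proof -
    have "restr zm_coords v = (\<lambda>c. (1 - \<theta>) * restr zm_coords a c + \<theta> * restr zm_coords b c)"
      unfolding v_def restr_def by auto
    then show ?thesis
      using is_convexD[OF is_convex_conv_hull, of "restr zm_coords a" G "restr zm_coords b" \<theta>] a b \<theta>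
      unfolding Erel_def by simp
  qed
  moreover have "(\<lambda>i. v (X i)) \<in> P"
    using is_convexD[OF P, of "\<lambda>i. a (X i)" "\<lambda>i. b (X i)" \<theta>] a b \<theta> unfolding Erel_def v_def by simp
  moreover have "(v (X i), zvec v i) \<in> Bset d p i \<and> zdvec v i \<in> Q i" if i: "i \<in> {1..n}" for i
  proof -
    have ab: "(a (X i), zvec a i) \<in> Bset d p i" "zdvec a i \<in> Q i"
      "(b (X i), zvec b i) \<in> Bset d p i" "zdvec b i \<in> Q i"
      using a b i unfolding Erel_def by auto
    have "zdvec v i = (\<lambda>q. (1 - \<theta>) * zdvec a i q + \<theta> * zdvec b i q)"
      unfolding v_def zdvec_def by (auto split: sum.split)
    then have "zdvec v i \<in> Q i" using is_convexD[OF Q_convex[OF i] ab(2,4)] \<theta> by simp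
    moreover have "(v (X i), zvec v i) \<in> Bset d p i"
      using Bset_convex_comb[OF ab(1,3)] \<theta> unfolding v_def zvec_def by simp
    ultimately show ?thesis by simp
  qed
  ultimately show "(\<lambda>c. (1 - \<theta>) * a c + \<theta> * b c) \<in> Rel P"
    unfolding Erel_def v_def by blast
qed

abbreviation "Mip P \<equiv> Eset n m d p r f \<phi> P Q"

lemma Mip_zvec_vert:
  assumes "v \<in> Mip P" "i \<in> {1..n}"
  shows "zvec v i \<in> vert_simplex (d i)"
proof -
  have "zdvec v i \<in> Q i" "\<forall>k\<in>{1..r i}. zdvec v i (Inr k) \<in> {0, 1}"
    using assms unfolding Eset_def Erel_def zdvec_def by auto
  then have "(\<lambda>j. zdvec v i (Inl j)) \<in> vert_simplex (d i)" using Q_binary_vert[OF assms(2)] by blast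
  then show ?thesis unfolding zdvec_def zvec_def by simp
qed

lemma Mip_restr_Gset:
  assumes v: "v \<in> Mip P"
  shows "restr zm_coords v \<in> G"
proof -
  have v': "v \<in> Rel P" using v unfolding Eset_def by simp
  show ?thesis
  proof (rule conv_hull_Gset_vert)
    show "restr zm_coords v \<in> conv_hull G" using v' unfolding Erel_def by simp
    show "\<forall>i\<in>{1..n}. zvec (restr zm_coords v) i \<in> vert_simplex (d i)"
      using Mip_zvec_vert[OF v] restr_zm_coords(3)[OF Rel_supp[OF v']] by simp
  qed
qed

lemma Mip_zvec_eq:
  assumes s: "s \<in> Mip P" and s': "s' \<in> Mip P" and i: "i \<in> {1..n}"
    and eq: "\<forall>k\<in>{1..r i}. s (Dl i k) = s' (Dl i k)"
  shows "zvec s i = zvec s' i"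
proof
  fix j
  define q where "q = (\<lambda>c. (1 - 1 / 2) * zdvec s i c + 1 / 2 * zdvec s' i c)"
  have "q \<in> Q i"
    unfolding q_def using s s' i by (intro is_convexD[OF Q_convex[OF i]]) (auto simp: Eset_def Erel_def)
  moreover have "\<forall>k\<in>{1..r i}. q (Inr k) \<in> {0, 1}"
    using eq s s' i unfolding q_def zdvec_def Eset_def by auto
  ultimately have q_vert: "(\<lambda>j. q (Inl j)) \<in> vert_simplex (d i)" by (rule Q_binary_vert[OF i])
  have s_vert: "zvec s i \<in> vert_simplex (d i)" "zvec s' i \<in> vert_simplex (d i)"
    using Mip_zvec_vert s s' i by blast+
  show "zvec s i j = zvec s' i j"
  proof (cases "j \<in> {1..d i}")
    case True
    then have "q (Inl j) \<in> {0, 1}" "zvec s i j \<in> {0, 1}" "zvec s' i j \<in> {0, 1}"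
      using q_vert s_vert unfolding vert_simplex_def by auto
    then show ?thesis unfolding q_def zdvec_def zvec_def by auto
  next
    case False
    then show ?thesis using s_vert unfolding vert_simplex_def Delta_simplex_def supp_in_def by simp
  qed
qed

lemma Mip_eqI:
  assumes s: "s \<in> Mip P" and s': "s' \<in> Mip P" and eq: "\<forall>c\<in>ID n r. s c = s' c"
  shows "s = s'"
proof -
  have sR: "s \<in> Rel P" and s'R: "s' \<in> Rel P" using s s' unfolding Eset_def by auto
  have "restr zm_coords s = restr zm_coords s'"
    using Mip_restr_Gset[OF s] Mip_restr_Gset[OF s'] Mip_zvec_eq[OF s s'] eq
      restr_zm_coords(3)[OF Rel_supp[OF sR]] restr_zm_coords(3)[OF Rel_supp[OF s'R]]
    by (intro Gset_eqI) auto
  moreover have "lift g (zdvec s) = lift g (zdvec s')" for g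
    using eq by (intro lift_cong_delta) (simp add: zdvec_def)
  ultimately have "lift (restr zm_coords s) (zdvec s) = lift (restr zm_coords s') (zdvec s')" by simp
  then show ?thesis using Rel_eq_lift[OF sR] Rel_eq_lift[OF s'R] by simp
qed

lemma Mip_step_vertex:
  assumes v: "v \<in> Mip P" and i: "i \<in> {1..n}"
  obtains k where "k \<le> d i" "zvec v i = step_vertex k" "v (X i) = p i k"
proof -
  obtain k where k: "k \<le> d i" "zvec v i = step_vertex k"
    using Mip_zvec_vert[OF v i] by (rule vert_simplex_step_vertex)
  have "v (X i) = p i 0 + (\<Sum>j\<in>{1..d i}. (p i j - p i (j - 1)) * zvec v i j)"
    using v i unfolding Eset_def Erel_def Bset_def by auto
  then have "v (X i) = p i k" using sum_diff_step_vertex[OF k(1), of "p i"] k(2) by simp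
  then show ?thesis using k that by blast
qed

lemma Mip_projection_subset: "restr (IX n \<union> IM m) ` Mip P \<subseteq> Target n m d p f \<phi> P"
proof
  fix w assume "w \<in> restr (IX n \<union> IM m) ` Mip P"
  then obtain v where v: "v \<in> Mip P" and w: "w = restr (IX n \<union> IM m) v" by blast
  have vR: "v \<in> Rel P" using v unfolding Eset_def by simp
  have supp: "supp_in coords v" using vR by (rule Rel_supp)
  have wX: "w (X i) = v (X i)" and wM: "w (Mu t) = v (Mu t)" for i t
    using supp unfolding w restr_def supp_in_def by auto
  have "w (Mu t) = \<phi> t (\<lambda>i. if i \<in> {1..n} then f t i (w (X i)) else 0)" if t: "t \<in> {1..m}" for t
  proof -
    have "ell d p f t i (zvec v i) = f t i (w (X i))" if i: "i \<in> {1..n}" for i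
      using Mip_step_vertex[OF v i] sum_diff_step_vertex_ell wX by metis
    then have "(\<lambda>i. if i \<in> {1..n} then ell d p f t i (zvec v i) else 0)
        = (\<lambda>i. if i \<in> {1..n} then f t i (w (X i)) else 0)"
      by auto
    moreover have "restr zm_coords v (Mu t)
        = \<phi> t (\<lambda>i. if i \<in> {1..n} then ell d p f t i (zvec (restr zm_coords v) i) else 0)"
      using Mip_restr_Gset[OF v] t unfolding Gset_def by blast
    then have "v (Mu t) = \<phi> t (\<lambda>i. if i \<in> {1..n} then ell d p f t i (zvec v i) else 0)"
      unfolding restr_zm_coords[OF supp] .
    ultimately show ?thesis using wM by simp
  qed
  moreover have "supp_in (IX n \<union> IM m) w" unfolding w restr_def supp_in_def by simp
  moreover have "(\<lambda>i. w (X i)) \<in> P" using vR wX unfolding Erel_def by simp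
  moreover have "w (X i) \<in> p i ` {0..d i}" if i: "i \<in> {1..n}" for i
    using Mip_step_vertex[OF v i] wX by (metis atLeastAtMost_iff image_eqI zero_le)
  ultimately show "w \<in> Target n m d p f \<phi> P" unfolding Target_def by blast
qed

definition Gpoint :: "(nat \<Rightarrow> nat) \<Rightarrow> coord \<Rightarrow> real" where
  "Gpoint K c = (case c of
      Z i j \<Rightarrow> if i \<in> {1..n} then step_vertex (K i) j else 0
    | Mu t \<Rightarrow> if t \<in> {1..m} then \<phi> t (\<lambda>i. if i \<in> {1..n} then f t i (p i (K i)) else 0) else 0
    | _ \<Rightarrow> 0)"

lemma zvec_Gpoint: "i \<in> {1..n} \<Longrightarrow> zvec (Gpoint K) i = step_vertex (K i)"
  unfolding zvec_def Gpoint_def by simp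

lemma Gpoint_in_Gset:
  assumes K: "\<forall>i\<in>{1..n}. K i \<le> d i"
  shows "Gpoint K \<in> G"
  unfolding Gset_def mem_Collect_eq
proof (intro conjI ballI)
  show "supp_in zm_coords (Gpoint K)"
    unfolding supp_in_def
  proof (intro allI impI)
    fix c assume c: "c \<notin> zm_coords"
    show "Gpoint K c = 0"
    proof (cases c)
      case (Z i j)
      show ?thesis
      proof (cases "i \<in> {1..n}")
        case True
        then have "K i \<le> d i" using K by blast
        then show ?thesis using Z c True by (auto simp: Gpoint_def step_vertex_def)
      qed (auto simp: Z Gpoint_def)
    qed (use c in \<open>auto simp: Gpoint_def\<close>)
  qed
  show "zvec (Gpoint K) i \<in> vert_simplex (d i)" if "i \<in> {1..n}" for i
    using zvec_Gpoint K that step_vertex_in_vert_simplex by simp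
  show "Gpoint K (Mu t) = \<phi> t (\<lambda>i. if i \<in> {1..n} then ell d p f t i (zvec (Gpoint K) i) else 0)"
    if "t \<in> {1..m}" for t
  proof -
    have "ell d p f t i (zvec (Gpoint K) i) = f t i (p i (K i))" if "i \<in> {1..n}" for i
      using K that zvec_Gpoint sum_diff_step_vertex_ell by simp
    then show ?thesis using that unfolding Gpoint_def by (auto intro!: arg_cong[where f = "\<phi> t"])
  qed
qed

lemma lift_Gpoint_X: "i \<in> {1..n} \<Longrightarrow> K i \<le> d i \<Longrightarrow> lift (Gpoint K) D (X i) = p i (K i)"
  using sum_diff_step_vertex[of "K i" "d i" "p i"] by (simp add: Gpoint_def)

lemma lift_Gpoint_in_Mip:
  assumes K: "\<forall>i\<in>{1..n}. K i \<le> d i"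
    and D: "\<forall>i\<in>{1..n}. D i \<in> Q i \<and> (\<forall>k\<in>{1..r i}. D i (Inr k) \<in> {0, 1}) \<and>
      (\<lambda>j. D i (Inl j)) = step_vertex (K i)"
    and P: "(\<lambda>i. lift (Gpoint K) D (X i)) \<in> P"
  shows "lift (Gpoint K) D \<in> Mip P"
proof -
  have G: "Gpoint K \<in> G" using K by (rule Gpoint_in_Gset)
  have "lift (Gpoint K) D \<in> Rel P"
  proof (rule lift_in_Rel[OF conv_hull_inc[OF G] P])
    show "\<forall>i\<in>{1..n}. zvec (Gpoint K) i \<in> Delta_simplex (d i)"
      using G unfolding Gset_def vert_simplex_def by simp
    show "\<forall>i\<in>{1..n}. D i \<in> Q i \<and> (\<lambda>j. D i (Inl j)) = zvec (Gpoint K) i" using D zvec_Gpoint by simp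
  qed
  moreover have "lift (Gpoint K) D c \<in> {0, 1}" if c: "c \<in> ID n r" for c
  proof -
    obtain i k where "c = Dl i k" "i \<in> {1..n}" "k \<in> {1..r i}" using c unfolding ID_def by blast
    then show ?thesis using D by simp
  qed
  ultimately show ?thesis unfolding Eset_def by blast
qed

lemma Target_subset_Mip_projection: "Target n m d p f \<phi> P \<subseteq> restr (IX n \<union> IM m) ` Mip P"
proof
  fix w assume w: "w \<in> Target n m d p f \<phi> P"
  have w_supp: "supp_in (IX n \<union> IM m) w" using w unfolding Target_def by simp
  have "\<forall>i\<in>{1..n}. \<exists>k. k \<le> d i \<and> w (X i) = p i k" using w unfolding Target_def by fastforce
  then obtain K where K: "\<forall>i\<in>{1..n}. K i \<le> d i \<and> w (X i) = p i (K i)"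
    by (rule bchoice[THEN exE]) blast
  have "\<forall>i\<in>{1..n}. \<exists>q. q \<in> Q i \<and> (\<forall>k\<in>{1..r i}. q (Inr k) \<in> {0, 1}) \<and> (\<lambda>j. q (Inl j)) = step_vertex (K i)"
  proof
    fix i assume i: "i \<in> {1..n}"
    then have "step_vertex (K i) \<in> (\<lambda>q j. q (Inl j)) ` (Q i \<inter> {q. \<forall>k\<in>{1..r i}. q (Inr k) \<in> {0, 1}})"
      using Q_binary_proj K step_vertex_in_vert_simplex by simp
    then show "\<exists>q. q \<in> Q i \<and> (\<forall>k\<in>{1..r i}. q (Inr k) \<in> {0, 1}) \<and> (\<lambda>j. q (Inl j)) = step_vertex (K i)"
      by auto
  qed
  then obtain D where D: "\<forall>i\<in>{1..n}. D i \<in> Q i \<and> (\<forall>k\<in>{1..r i}. D i (Inr k) \<in> {0, 1}) \<and>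
      (\<lambda>j. D i (Inl j)) = step_vertex (K i)"
    by (rule bchoice[THEN exE]) blast
  have lift_X: "lift (Gpoint K) D (X i) = w (X i)" for i
    using K lift_Gpoint_X w_supp unfolding supp_in_def by (cases "i \<in> {1..n}") auto
  have "(\<lambda>i. lift (Gpoint K) D (X i)) \<in> P" using w unfolding lift_X Target_def by simp
  moreover have "\<forall>i\<in>{1..n}. K i \<le> d i" using K by blast
  ultimately have "lift (Gpoint K) D \<in> Mip P" using D by (intro lift_Gpoint_in_Mip)
  moreover have "restr (IX n \<union> IM m) (lift (Gpoint K) D) = w"
  proof
    fix c
    show "restr (IX n \<union> IM m) (lift (Gpoint K) D) c = w c"
    proof (cases c)
      case (X i)
      then show ?thesis using lift_X[of i] w_supp unfolding restr_def supp_in_def by (simp del: lift_simps)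
    next
      case (Mu t)
      have "w (Mu t) = \<phi> t (\<lambda>i. if i \<in> {1..n} then f t i (p i (K i)) else 0)" if "t \<in> {1..m}"
        using w K that unfolding Target_def by (auto intro!: arg_cong[where f = "\<phi> t"])
      then show ?thesis using Mu w_supp unfolding restr_def supp_in_def Gpoint_def by auto
    qed (use w_supp in \<open>auto simp: restr_def supp_in_def\<close>)
  qed
  ultimately show "w \<in> restr (IX n \<union> IM m) ` Mip P" by force
qed

lemma Mip_mip_formulation:
  "mip_formulation coords (ID n r) (IX n \<union> IM m) (Mip P) (Target n m d p f \<phi> P)"
  unfolding mip_formulation_def
proof (intro conjI)
  show "\<exists>R. polyhedron_in coords R \<and> Mip P = R \<inter> {v. \<forall>c\<in>ID n r. v c \<in> {0, 1}}"
    using finite_coords Mip_eqI Rel_supp unfolding Eset_def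
    by (intro binary_determined_mip_representable) auto
  show "restr (IX n \<union> IM m) ` Mip P = Target n m d p f \<phi> P"
    using Mip_projection_subset Target_subset_Mip_projection by blast
qed auto


lemma Q_conv_hull_binary:
  assumes ideal: "\<forall>q. is_vertex q (Q i) \<longrightarrow> (\<forall>k\<in>{1..r i}. q (Inr k) \<in> {0, 1})"
    and i: "i \<in> {1..n}" and q: "q \<in> Q i"
  shows "q \<in> conv_hull (Q i \<inter> {q. \<forall>k\<in>{1..r i}. q (Inr k) \<in> {0, 1}})"
proof -
  have "{q. is_vertex q (Q i)} \<subseteq> Q i \<inter> {q. \<forall>k\<in>{1..r i}. q (Inr k) \<in> {0, 1}}"
    using ideal unfolding is_vertex_def by blast
  then show ?thesis using polytope_in_subset_conv_hull Q_polytope i q by blast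
qed

lemma Q_binary_decomposition:
  assumes ideal: "\<forall>q. is_vertex q (Q i) \<longrightarrow> (\<forall>k\<in>{1..r i}. q (Inr k) \<in> {0, 1})"
    and i: "i \<in> {1..n}" and q0: "q0 \<in> Q i"
  obtains S \<alpha> qs \<kappa> where
    "\<forall>s<(S::nat). 0 \<le> \<alpha> s \<and> qs s \<in> Q i \<and> (\<forall>k\<in>{1..r i}. qs s (Inr k) \<in> {0, 1}) \<and>
        \<kappa> s \<le> d i \<and> (\<lambda>j. qs s (Inl j)) = step_vertex (\<kappa> s)"
    "(\<Sum>s<S. \<alpha> s) = 1" "q0 = (\<lambda>c. \<Sum>s<S. \<alpha> s * qs s c)"
proof -
  obtain S \<alpha> qs where qs: "\<forall>s<(S::nat). 0 \<le> \<alpha> s \<and> qs s \<in> Q i \<inter> {q. \<forall>k\<in>{1..r i}. q (Inr k) \<in> {0, 1}}"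
    and \<alpha>: "(\<Sum>s<S. \<alpha> s) = 1" and q0_eq: "q0 = (\<lambda>c. \<Sum>s<S. \<alpha> s * qs s c)"
    using Q_conv_hull_binary[OF ideal i q0] by (rule conv_hullE)
  define \<kappa> where "\<kappa> s = card (ones_on {1..d i} (\<lambda>j. qs s (Inl j)))" for s
  have "\<kappa> s \<le> d i \<and> (\<lambda>j. qs s (Inl j)) = step_vertex (\<kappa> s)" if "s < S" for s
    using vert_simplex_eq_step_vertex_card[OF Q_binary_vert[OF i]] qs that unfolding \<kappa>_def by auto
  then show ?thesis using that[of S \<alpha> qs \<kappa>] qs \<alpha> q0_eq by auto
qed

text \<open>The pieces are conditional averages of a decomposition of \<open>q0\<close> into binary points
  of \<open>Q i\<close>, grouped by their z-part; the group weights are the weights \<open>\<beta>\<close> grouped by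
  \<open>kz\<close>, as both are determined by the z-part of \<open>q0\<close>.\<close>

lemma Q_split_along_steps:
  fixes \<beta> :: "'l \<Rightarrow> real"
  assumes ideal: "\<forall>q. is_vertex q (Q i) \<longrightarrow> (\<forall>k\<in>{1..r i}. q (Inr k) \<in> {0, 1})"
    and i: "i \<in> {1..n}" and q0: "q0 \<in> Q i"
    and L: "finite L" "\<forall>l\<in>L. 0 \<le> \<beta> l" "sum \<beta> L = 1" "\<forall>l\<in>L. kz l \<le> d i"
    and z: "\<forall>j\<in>{1..d i}. q0 (Inl j) = (\<Sum>l\<in>L. \<beta> l * step_vertex (kz l) j)"
  obtains D where "\<forall>l\<in>L. 0 < \<beta> l \<longrightarrow> D l \<in> Q i \<and> (\<lambda>j. D l (Inl j)) = step_vertex (kz l)"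
    "\<forall>k. q0 (Inr k) = (\<Sum>l\<in>L. \<beta> l * D l (Inr k))"
proof -
  obtain S \<alpha> qs \<kappa> where qs: "\<forall>s<(S::nat). 0 \<le> \<alpha> s \<and> qs s \<in> Q i \<and>
        (\<forall>k\<in>{1..r i}. qs s (Inr k) \<in> {0, 1}) \<and> \<kappa> s \<le> d i \<and> (\<lambda>j. qs s (Inl j)) = step_vertex (\<kappa> s)"
    and \<alpha>: "(\<Sum>s<S. \<alpha> s) = 1" and q0_eq: "q0 = (\<lambda>c. \<Sum>s<S. \<alpha> s * qs s c)"
    using Q_binary_decomposition[OF ideal i q0] by blast
  have qs_Inl: "qs s (Inl j) = step_vertex (\<kappa> s) j" if "s < S" for s j
    using qs that by (metis (mono_tags, lifting))
  define C where "C k = {s\<in>{..<S}. \<kappa> s = k}" for k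
  have marginal: "(\<Sum>l\<in>{l\<in>L. kz l = k}. \<beta> l) = sum \<alpha> (C k)" for k
    unfolding C_def
  proof (rule step_vertex_weights_unique[OF L(1,3,4) finite_lessThan \<alpha>])
    show "\<forall>s\<in>{..<S}. \<kappa> s \<le> d i" using qs by simp
    show "\<forall>j\<in>{1..d i}. (\<Sum>l\<in>L. \<beta> l * step_vertex (kz l) j) = (\<Sum>s<S. \<alpha> s * step_vertex (\<kappa> s) j)"
      using z q0_eq qs_Inl by simp
  qed
  define D where "D l = (\<lambda>q. (\<Sum>s\<in>C (kz l). \<alpha> s * qs s q) / sum \<alpha> (C (kz l)))" for l
  have "D l \<in> Q i \<and> (\<lambda>j. D l (Inl j)) = step_vertex (kz l)" if l: "l \<in> L" "0 < \<beta> l" for l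
  proof
    have "\<beta> l \<le> (\<Sum>l'\<in>{l'\<in>L. kz l' = kz l}. \<beta> l')"
      using L l by (intro member_le_sum) auto
    then have pos: "0 < sum \<alpha> (C (kz l))" using marginal l by simp
    show "D l \<in> Q i"
      unfolding D_def using qs pos
      by (intro convex_conditional_average[OF Q_convex[OF i]]) (auto simp: C_def)
    have "D l (Inl j) = step_vertex (kz l) j" for j
      unfolding D_def using pos qs_Inl by (simp add: C_def flip: sum_distrib_right)
    then show "(\<lambda>j. D l (Inl j)) = step_vertex (kz l)" by blast
  qed
  moreover have "q0 (Inr k) = (\<Sum>l\<in>L. \<beta> l * D l (Inr k))" for k
    unfolding D_def q0_eq C_def
    using sum_conditional_average[OF L(1) _ _ marginal[unfolded C_def, THEN allI]] qs by simp
  ultimately show ?thesis using that by blast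
qed

abbreviation "Rn \<equiv> {x :: nat \<Rightarrow> real. supp_in {1..n} x}"

lemma Rel_split_delta:
  assumes ideal: "\<forall>i\<in>{1..n}. \<forall>q. is_vertex q (Q i) \<longrightarrow> (\<forall>k\<in>{1..r i}. q (Inr k) \<in> {0, 1})"
    and v: "v \<in> Rel P" and g: "\<forall>l<(K::nat). 0 \<le> \<beta> l \<and> g l \<in> G" "(\<Sum>l<K. \<beta> l) = 1"
    and v_zm: "restr zm_coords v = (\<lambda>c. \<Sum>l<K. \<beta> l * g l c)"
  obtains D where
    "\<forall>i\<in>{1..n}. \<forall>l<K. 0 < \<beta> l \<longrightarrow> D i l \<in> Q i \<and> (\<lambda>j. D i l (Inl j)) = zvec (g l) i"
    "\<forall>i\<in>{1..n}. \<forall>k. zdvec v i (Inr k) = (\<Sum>l<K. \<beta> l * D i l (Inr k))"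
proof -
  define kz where "kz l i = card (ones_on {1..d i} (zvec (g l) i))" for l i
  have kz: "kz l i \<le> d i" "zvec (g l) i = step_vertex (kz l i)" if "l < K" "i \<in> {1..n}" for l i
    using vert_simplex_eq_step_vertex_card g(1) that unfolding kz_def Gset_def by auto
  have "\<exists>D. (\<forall>l\<in>{..<K}. 0 < \<beta> l \<longrightarrow> D l \<in> Q i \<and> (\<lambda>j. D l (Inl j)) = step_vertex (kz l i)) \<and>
      (\<forall>k. zdvec v i (Inr k) = (\<Sum>l\<in>{..<K}. \<beta> l * D l (Inr k)))" if i: "i \<in> {1..n}" for i
  proof -
    have "zdvec v i (Inl j) = (\<Sum>l<K. \<beta> l * zvec (g l) i j)" for j
      using fun_cong[OF v_zm, of "Z i j"] restr_zm_coords(1)[OF Rel_supp[OF v]]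
      unfolding zdvec_def zvec_def by simp
    then have z: "\<forall>j\<in>{1..d i}. zdvec v i (Inl j) = (\<Sum>l\<in>{..<K}. \<beta> l * step_vertex (kz l i) j)"
      using kz(2) i by simp
    have vQ: "zdvec v i \<in> Q i" using v i unfolding Erel_def by simp
    have "\<forall>l\<in>{..<K}. 0 \<le> \<beta> l" "\<forall>l\<in>{..<K}. kz l i \<le> d i" using g(1) kz(1) i by auto
    then obtain D where "\<forall>l\<in>{..<K}. 0 < \<beta> l \<longrightarrow> D l \<in> Q i \<and> (\<lambda>j. D l (Inl j)) = step_vertex (kz l i)"
      "\<forall>k. zdvec v i (Inr k) = (\<Sum>l\<in>{..<K}. \<beta> l * D l (Inr k))"
      by (rule Q_split_along_steps[OF bspec[OF ideal i] i vQ finite_lessThan _ g(2) _ z])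
    then show ?thesis by (intro exI[of _ D] conjI)
  qed
  from bchoice[OF ballI[OF this]] obtain D where D: "\<forall>i\<in>{1..n}.
      (\<forall>l\<in>{..<K}. 0 < \<beta> l \<longrightarrow> D i l \<in> Q i \<and> (\<lambda>j. D i l (Inl j)) = step_vertex (kz l i)) \<and>
      (\<forall>k. zdvec v i (Inr k) = (\<Sum>l\<in>{..<K}. \<beta> l * D i l (Inr k)))"
    by (rule exE)
  then show ?thesis using that[of D] kz(2) by simp
qed

lemma Rel_conv_hull_Gset_points:
  assumes ideal: "\<forall>i\<in>{1..n}. \<forall>q. is_vertex q (Q i) \<longrightarrow> (\<forall>k\<in>{1..r i}. q (Inr k) \<in> {0, 1})"
    and v: "v \<in> Rel Rn"
  shows "v \<in> conv_hull {w \<in> Rel Rn. restr zm_coords w \<in> G}"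
proof -
  have "restr zm_coords v \<in> conv_hull G" using v unfolding Erel_def by simp
  then obtain K \<beta> g where g: "\<forall>l<(K::nat). 0 \<le> \<beta> l \<and> g l \<in> G" "(\<Sum>l<K. \<beta> l) = 1"
    and v_zm: "restr zm_coords v = (\<lambda>c. \<Sum>l<K. \<beta> l * g l c)"
    by (rule conv_hullE)
  obtain D where D: "\<forall>i\<in>{1..n}. \<forall>l<K. 0 < \<beta> l \<longrightarrow> D i l \<in> Q i \<and> (\<lambda>j. D i l (Inl j)) = zvec (g l) i"
    "\<forall>i\<in>{1..n}. \<forall>k. zdvec v i (Inr k) = (\<Sum>l<K. \<beta> l * D i l (Inr k))"
    using Rel_split_delta[OF ideal v g v_zm] by blast
  define w where "w l = lift (g l) (\<lambda>i. D i l)" for l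
  have w_in: "w l \<in> Rel Rn \<and> restr zm_coords (w l) \<in> G" if l: "l < K" "0 < \<beta> l" for l
  proof
    have gl: "g l \<in> G" using g(1) l(1) by simp
    show "w l \<in> Rel Rn"
      unfolding w_def
    proof (rule lift_in_Rel)
      show "g l \<in> conv_hull G" using gl by (rule conv_hull_inc)
      show "(\<lambda>i. lift (g l) (\<lambda>i. D i l) (X i)) \<in> Rn" unfolding supp_in_def by simp
      show "\<forall>i\<in>{1..n}. zvec (g l) i \<in> Delta_simplex (d i)"
        using gl unfolding Gset_def vert_simplex_def by simp
      show "\<forall>i\<in>{1..n}. D i l \<in> Q i \<and> (\<lambda>j. D i l (Inl j)) = zvec (g l) i"
        using D(1) l by simp
    qed
    show "restr zm_coords (w l) \<in> G"
      unfolding w_def using restr_lift[OF Gset_supp[OF gl]] gl by simp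
  qed
  have "v = lift (\<lambda>c. \<Sum>l<K. \<beta> l * g l c) (zdvec v)"
    using Rel_eq_lift[OF v] unfolding v_zm .
  also have "\<dots> = lift (\<lambda>c. \<Sum>l<K. \<beta> l * g l c) (\<lambda>i q. \<Sum>l<K. \<beta> l * D i l q)"
    using D(2) by (intro lift_cong_delta) simp
  also have "\<dots> = (\<lambda>c. \<Sum>l<K. \<beta> l * w l c)"
    unfolding w_def using g(2) by (rule lift_convex_sum[symmetric, OF finite_lessThan])
  also have "\<dots> \<in> conv_hull {w \<in> Rel Rn. restr zm_coords w \<in> G}"
    by (rule conv_hull_convex_sum) (use g w_in in auto)
  finally show ?thesis .
qed

lemma lift_update_in_Rel:
  assumes v: "v \<in> Rel P" and i: "i \<in> {1..n}" and q: "q \<in> Q i" "(\<lambda>j. q (Inl j)) = zvec v i"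
  shows "lift (restr zm_coords v) ((zdvec v)(i := q)) \<in> Rel P"
proof (rule lift_in_Rel)
  have supp: "supp_in coords v" using v by (rule Rel_supp)
  show "restr zm_coords v \<in> conv_hull G" using v unfolding Erel_def by simp
  have "lift (restr zm_coords v) D (X i') = v (X i')" for D i'
    using fun_cong[OF Rel_eq_lift[OF v], of "X i'"] by simp
  then show "(\<lambda>i'. lift (restr zm_coords v) ((zdvec v)(i := q)) (X i')) \<in> P"
    using v unfolding Erel_def by simp
  show "\<forall>i'\<in>{1..n}. zvec (restr zm_coords v) i' \<in> Delta_simplex (d i')"
    using v restr_zm_coords(3)[OF supp] unfolding Erel_def Bset_def by simp
  show "\<forall>i'\<in>{1..n}. ((zdvec v)(i := q)) i' \<in> Q i' \<and>
      (\<lambda>j. ((zdvec v)(i := q)) i' (Inl j)) = zvec (restr zm_coords v) i'"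
    using v q restr_zm_coords(3)[OF supp] unfolding Erel_def zdvec_def zvec_def by auto
qed

lemma Rel_eq_convex_sum_update:
  assumes v: "v \<in> Rel P" and F: "finite F" "sum \<alpha> F = 1"
    and v_i: "zdvec v i = (\<lambda>c. \<Sum>s\<in>F. \<alpha> s * qs s c)"
  shows "v = (\<lambda>c. \<Sum>s\<in>F. \<alpha> s * lift (restr zm_coords v) ((zdvec v)(i := qs s)) c)"
proof -
  have "v = lift (\<lambda>c. \<Sum>s\<in>F. \<alpha> s * restr zm_coords v c) (zdvec v)"
    using Rel_eq_lift[OF v] F(2) by (simp flip: sum_distrib_right)
  also have "\<dots> = lift (\<lambda>c. \<Sum>s\<in>F. \<alpha> s * restr zm_coords v c) (\<lambda>i' q. \<Sum>s\<in>F. \<alpha> s * ((zdvec v)(i := qs s)) i' q)"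
  proof (intro lift_cong_delta ballI)
    fix i' k
    show "zdvec v i' (Inr k) = (\<Sum>s\<in>F. \<alpha> s * ((zdvec v)(i := qs s)) i' (Inr k))"
      using v_i F(2) by (cases "i' = i") (simp_all flip: sum_distrib_right)
  qed
  also have "\<dots> = (\<lambda>c. \<Sum>s\<in>F. \<alpha> s * lift (restr zm_coords v) ((zdvec v)(i := qs s)) c)"
    using F by (rule lift_convex_sum[symmetric])
  finally show ?thesis .
qed

lemma Rel_conv_hull_delta_binary:
  assumes ideal: "\<forall>q. is_vertex q (Q i) \<longrightarrow> (\<forall>k\<in>{1..r i}. q (Inr k) \<in> {0, 1})"
    and i: "i \<in> {1..n}" and v: "v \<in> Rel P" and vert: "zvec v i \<in> vert_simplex (d i)"
  shows "v \<in> conv_hull {w \<in> Rel P. \<forall>k\<in>{1..r i}. w (Dl i k) \<in> {0, 1}}"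
proof -
  have "zdvec v i \<in> Q i" using v i unfolding Erel_def by simp
  then obtain S \<alpha> qs \<kappa> where qs: "\<forall>s<(S::nat). 0 \<le> \<alpha> s \<and> qs s \<in> Q i \<and>
        (\<forall>k\<in>{1..r i}. qs s (Inr k) \<in> {0, 1}) \<and> \<kappa> s \<le> d i \<and> (\<lambda>j. qs s (Inl j)) = step_vertex (\<kappa> s)"
    and \<alpha>: "(\<Sum>s<S. \<alpha> s) = 1" and v_i: "zdvec v i = (\<lambda>c. \<Sum>s<S. \<alpha> s * qs s c)"
    by (rule Q_binary_decomposition[OF ideal i])
  have "zvec v i = (\<lambda>j. \<Sum>s<S. \<alpha> s * qs s (Inl j))"
    using v_i unfolding zdvec_def zvec_def by (metis sum.case(1))
  moreover have "\<forall>s\<in>{..<S}. (\<lambda>j. qs s (Inl j)) \<in> Delta_simplex (d i)"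
    using qs step_vertex_in_vert_simplex unfolding vert_simplex_def by simp
  moreover have "\<forall>s\<in>{..<S}. 0 \<le> \<alpha> s" using qs by simp
  ultimately have qs_z: "(\<lambda>j. qs s (Inl j)) = zvec v i" if "s < S" "0 < \<alpha> s" for s
    using vert_simplex_convex_sum_eq[OF finite_lessThan _ \<alpha>, of "\<lambda>s j. qs s (Inl j)" "d i" s] vert that
    by simp
  have "lift (restr zm_coords v) ((zdvec v)(i := qs s)) \<in> {w \<in> Rel P. \<forall>k\<in>{1..r i}. w (Dl i k) \<in> {0, 1}}"
    if "s < S" "0 < \<alpha> s" for s
    using lift_update_in_Rel[OF v i _ qs_z[OF that]] qs that i by simp
  then show ?thesis
    by (subst Rel_eq_convex_sum_update[OF v finite_lessThan \<alpha> v_i]) (rule conv_hull_convex_sum, use qs \<alpha> in auto)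
qed

lemma Rel_vertex_binary:
  assumes ideal: "\<forall>i\<in>{1..n}. \<forall>q. is_vertex q (Q i) \<longrightarrow> (\<forall>k\<in>{1..r i}. q (Inr k) \<in> {0, 1})"
    and vx: "is_vertex v (Rel Rn)" and c: "c \<in> ID n r"
  shows "v c \<in> {0, 1}"
proof -
  have convex: "is_convex (Rel Rn)" by (rule Rel_is_convex) (simp add: is_convex_def supp_in_def)
  have v: "v \<in> Rel Rn" using vx unfolding is_vertex_def by simp
  have "v \<in> {w \<in> Rel Rn. restr zm_coords w \<in> G}"
    using vertex_mem_conv_hull[OF vx convex _ Rel_conv_hull_Gset_points[OF ideal v]] by blast
  then have vert: "zvec v i \<in> vert_simplex (d i)" if "i \<in> {1..n}" for i
    using that restr_zm_coords(3)[OF Rel_supp[OF v]] unfolding Gset_def by auto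
  obtain i k where ik: "c = Dl i k" "i \<in> {1..n}" "k \<in> {1..r i}" using c unfolding ID_def by blast
  have "v \<in> {w \<in> Rel Rn. \<forall>k\<in>{1..r i}. w (Dl i k) \<in> {0, 1}}"
    using vertex_mem_conv_hull[OF vx convex _ Rel_conv_hull_delta_binary[OF _ ik(2) v vert[OF ik(2)]]]
      ideal ik(2) by blast
  then show ?thesis using ik by simp
qed

end

theorem lemma2:
  fixes n m :: nat
    and d r :: "nat \<Rightarrow> nat"
    and p :: "nat \<Rightarrow> nat \<Rightarrow> real"
    and P :: "(nat \<Rightarrow> real) set"
    and f :: "nat \<Rightarrow> nat \<Rightarrow> real \<Rightarrow> real"
    and L U :: "nat \<Rightarrow> nat \<Rightarrow> real"
    and \<phi> :: "nat \<Rightarrow> (nat \<Rightarrow> real) \<Rightarrow> real"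
    and Q :: "nat \<Rightarrow> (nat + nat \<Rightarrow> real) set"
  assumes "n \<ge> 1" and "m \<ge> 1"
    and "\<forall>i\<in>{1..n}. d i \<ge> 1"
    and "\<forall>i\<in>{1..n}. \<forall>j<d i. p i j < p i (j + 1)"
    and "polytope_in {1..n} P"
    and "\<forall>t\<in>{1..m}. \<forall>i\<in>{1..n}. \<forall>j\<in>{0..d i}. f t i (p i j) \<in> {L t i .. U t i}"
    and "\<forall>i\<in>{1..n}. r i \<ge> 1"
    and "\<forall>i\<in>{1..n}. polytope_in (Inl ` {1..d i} \<union> Inr ` {1..r i}) (Q i)"
    and "\<forall>i\<in>{1..n}. (\<lambda>q j. q (Inl j)) ` (Q i \<inter> {q. \<forall>k\<in>{1..r i}. q (Inr k) \<in> {0, 1}})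
                     = vert_simplex (d i)"
  shows "mip_formulation (IX n \<union> IZ n d \<union> IM m \<union> ID n r) (ID n r) (IX n \<union> IM m)
           (Eset n m d p r f \<phi> P Q) (Target n m d p f \<phi> P)
         \<and> ((\<forall>i\<in>{1..n}. \<forall>q. is_vertex q (Q i) \<longrightarrow> (\<forall>k\<in>{1..r i}. q (Inr k) \<in> {0, 1}))
            \<longrightarrow> (\<forall>v. is_vertex v (Erel n m d p r f \<phi> {x. supp_in {1..n} x} Q)
                      \<longrightarrow> (\<forall>c\<in>ID n r. v c \<in> {0, 1})))"
proof -
  interpret mip_data n m d r p f \<phi> Q
    by (rule mip_data.intro[OF assms(8,9)])
  show ?thesis using Mip_mip_formulation[of P] Rel_vertex_binary by blast
qed

end
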